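(* Let $U=\begin{bmatrix} c_{RR} & c_{LR}\\ c_{RL} & c_{LL}\end{bmatrix}\in \mathrm{U}(2)$ with $c_{RR}\neq 0$, and let $\alpha,\beta\in\mathbb{C}$ with $|\alpha|^2+|\beta|^2=1$. Let $X_t^{(I)}$ be the Type I quantum walk with coin $U$ and initial state $\Psi_0^{(I)}=\alpha|0,S\rangle+\beta|0,L\rangle$. Put $a=\overline{c_{LR}}\,\Delta^{1/2}$, $\rho=\sqrt{1-|a|^2}$, $\phi=(\sigma_R-\sigma_L)/2$ and $$\nu_I(a)=\frac{\mathrm{sgn}(\mathrm{Re}(a))}{\rho}\left\{\sqrt{1-\mathrm{Im}(a)^2}-|\mathrm{Re}(a)|\right\}.$$ Then for every $x\in\{0,1,2,\dots\}$, $$\lim_{t\to\infty}P(X_t^{(I)}=x)=\frac{\mathrm{Re}(a)^2}{1-\mathrm{Im}(a)^2}\,\bigl|\alpha e^{i\phi/2}+\beta e^{-i\phi/2}\nu_I(a)\bigr|^2\,(1+\nu_I(a)^2)\,\nu_I(a)^{2x}.$$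
   Context: For the coin $U$ above: $\Delta=\det U$, $\sigma_R=\arg(c_{RR})$, $\sigma_L=\arg(c_{LL})$ (by unitarity $|c_{LL}|=|c_{RR}|$, $\Delta=e^{i(\sigma_R+\sigma_L)}$, $c_{RL}=-\Delta\overline{c_{LR}}$), and $\Delta^{1/2}:=e^{i(\sigma_R+\sigma_L)/2}$. $\mathrm{sgn}(x)=1,0,-1$ for $x>0,x=0,x<0$. Type I quantum walk: the Hilbert space $\mathcal{H}^{(I)}$ has orthonormal basis $\{|0,S\rangle,|0,L\rangle\}\cup\{|x,R\rangle,|x,L\rangle: x\ge 1\}$; the unitary one-step evolution $W^{(I,U)}$ is defined by $W|0,S\rangle=c_{RR}|1,R\rangle+c_{LR}|0,S\rangle$, $W|0,L\rangle=c_{RL}|1,R\rangle+c_{LL}|0,L\rangle$, and for $x\ge1$: $W|x,R\rangle=c_{RR}|x+1,R\rangle+c_{LR}|x-1,L\rangle$, $W|x,L\rangle=c_{RL}|x+1,R\rangle+c_{LL}|x-1,L\rangle$, where for $x=1$ the vector $|0,L\rangle$ appears as $|x-1,L\rangle$ and $|0,S\rangle$ plays the role of the position-$0$ "$R$"-state. The probability of finding the walker at position $x$ at time $t$ is $P(X_t^{(I)}=x)=\sum_{e}|\langle e,(W^{(I,U)})^t\Psi_0^{(I)}\rangle|^2$, the sum over basis vectors $e$ located at position $x$ (i.e. $|0,S\rangle,|0,L\rangle$ for $x=0$; $|x,R\rangle,|x,L\rangle$ for $x\ge1$). *)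

theory Defs
  imports "HOL-Analysis.Analysis"
begin

definition unitary2 :: "complex \<Rightarrow> complex \<Rightarrow> complex \<Rightarrow> complex \<Rightarrow> bool" where
  "unitary2 cRR cLR cRL cLL \<longleftrightarrow>
     cnj cRR * cRR + cnj cRL * cRL = 1 \<and>
     cnj cLR * cLR + cnj cLL * cLL = 1 \<and>
     cnj cRR * cLR + cnj cRL * cLL = 0 \<and>
     cnj cLR * cRR + cnj cLL * cRL = 0"

text \<open>States of the Type I walk: psi x True is the coefficient of |x,R> for x >= 1 and of
  |0,S> for x = 0; psi x False is the coefficient of |x,L>.
  One step of the evolution W (coefficient form of the action on basis vectors):
  W|0,S> = cRR|1,R> + cLR|0,S>, W|0,L> = cRL|1,R> + cLL|0,S>,
  W|x,R> = cRR|x+1,R> + cLR|x-1,L>, W|x,L> = cRL|x+1,R> + cLL|x-1,L> (x >= 1).\<close>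
definition typeI_step ::
  "complex \<Rightarrow> complex \<Rightarrow> complex \<Rightarrow> complex \<Rightarrow> (nat \<Rightarrow> bool \<Rightarrow> complex) \<Rightarrow> (nat \<Rightarrow> bool \<Rightarrow> complex)" where
  "typeI_step cRR cLR cRL cLL psi = (\<lambda>x c.
     if c then
       (if x = 0 then cLR * psi 0 True + cLL * psi 0 False
        else cRR * psi (x - 1) True + cRL * psi (x - 1) False)
     else cLR * psi (x + 1) True + cLL * psi (x + 1) False)"

definition typeI_init :: "complex \<Rightarrow> complex \<Rightarrow> (nat \<Rightarrow> bool \<Rightarrow> complex)" where
  "typeI_init \<alpha> \<beta> = (\<lambda>x c. if x = 0 then (if c then \<alpha> else \<beta>) else 0)"

definition typeI_prob ::
  "complex \<Rightarrow> complex \<Rightarrow> complex \<Rightarrow> complex \<Rightarrow> complex \<Rightarrow> complex \<Rightarrow> nat \<Rightarrow> nat \<Rightarrow> real" where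
  "typeI_prob cRR cLR cRL cLL \<alpha> \<beta> t x =
     (let psi = (typeI_step cRR cLR cRL cLL ^^ t) (typeI_init \<alpha> \<beta>)
      in (cmod (psi x True))\<^sup>2 + (cmod (psi x False))\<^sup>2)"

definition nu_I :: "complex \<Rightarrow> real" where
  "nu_I a = sgn (Re a) / sqrt (1 - (cmod a)\<^sup>2) * (sqrt (1 - (Im a)\<^sup>2) - \<bar>Re a\<bar>)"

end

theory Submission
  imports Defs "HOL-Analysis.FPS_Convergence"
begin

text \<open>
  A gauge transformation (phases \<open>\<Delta>\<^sup>1\<^sup>/\<^sup>2\<close> and \<open>e\<^sup>i\<^sup>\<phi>\<^sup>x\<close>) reduces every unitary coin with
  \<open>c\<^sub>R\<^sub>R \<noteq> 0\<close> to the coin \<open>[[\<rho>, cnj a], [-a, \<rho>]]\<close>, \<open>\<rho> = \<surd>(1 - |a|\<^sup>2)\<close>.  For this walk we solve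
  the recursion for the generating functions in time of the amplitudes: with the transfer series
  \<open>F\<close>, the root of \<open>a X F\<^sup>2 + (1 - X\<^sup>2) F - cnj a X = 0\<close> with \<open>F(0) = 0\<close>, every generating
  function is \<open>P W / (\<rho>\<^sup>2 (1 + (a - cnj a) X - X\<^sup>2))\<close> with absolutely summable \<open>P\<close> and \<open>W\<close>.
  The kernel has two simple zeros \<open>\<zeta>\<^sub>0, \<zeta>\<^sub>1\<close> on the unit circle and \<open>W(\<zeta>\<^sub>1) = 0\<close>, so a partial
  fraction argument shows that the amplitudes are asymptotically geometric with ratio
  \<open>cnj \<zeta>\<^sub>0\<close>; the squared residues at \<open>\<zeta>\<^sub>0\<close> give the limit.  Analytically we need only that
  series with absolutely summable coefficients form an algebra on which evaluation on the
  closed unit disk is multiplicative, and that \<open>\<surd>(1 + X)\<close> is such a series.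
\<close>

unbundle no vec_syntax
unbundle fps_syntax

section \<open>Absolutely summable power series on the closed unit disk\<close>

definition wiener :: "complex fps \<Rightarrow> bool" where
  "wiener f \<longleftrightarrow> summable (\<lambda>n. norm (f $ n))"

lemma wiener_summable_norm:
  assumes "wiener f" "norm z \<le> 1"
  shows "summable (\<lambda>n. norm (f $ n * z ^ n))"
proof (rule summable_comparison_test)
  show "summable (\<lambda>n. norm (f $ n))" using assms(1) by (simp add: wiener_def)
  have "norm (f $ n) * norm z ^ n \<le> norm (f $ n)" for n
    using assms(2) by (simp add: mult_left_le power_le_one)
  then show "\<exists>N. \<forall>n\<ge>N. norm (norm (f $ n * z ^ n)) \<le> norm (f $ n)"
    by (simp add: norm_mult norm_power)
qed

lemma wiener_summable: "wiener f \<Longrightarrow> norm z \<le> 1 \<Longrightarrow> summable (\<lambda>n. f $ n * z ^ n)"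
  by (rule summable_norm_cancel[OF wiener_summable_norm])

lemma wiener_polynomial:
  assumes "\<And>n. n > N \<Longrightarrow> f $ n = 0"
  shows "wiener f"
  unfolding wiener_def by (rule summable_finite[of "{..N}"]) (auto simp: assms)

lemma wiener_0 [simp]: "wiener 0"
  by (simp add: wiener_def)

lemma wiener_const [simp]: "wiener (fps_const c)"
  and wiener_1 [simp]: "wiener 1"
  and wiener_X [simp]: "wiener fps_X"
  by (rule wiener_polynomial[of 0] wiener_polynomial[of 1]; auto simp: fps_X_def)+

lemma wiener_add [simp]:
  assumes "wiener f" "wiener g"
  shows "wiener (f + g)"
  unfolding wiener_def
proof (rule summable_comparison_test[of _ "\<lambda>n. norm (f $ n) + norm (g $ n)"])
  show "summable (\<lambda>n. norm (f $ n) + norm (g $ n))"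
    using assms by (intro summable_add) (auto simp: wiener_def)
qed (simp add: norm_triangle_ineq)

lemma wiener_uminus [simp]: "wiener f \<Longrightarrow> wiener (- f)"
  by (simp add: wiener_def)

lemma wiener_diff [simp]: "wiener f \<Longrightarrow> wiener g \<Longrightarrow> wiener (f - g)"
  using wiener_add[of f "- g"] by simp

text \<open>Closure under products is the Cauchy product of absolutely convergent series.\<close>
lemma wiener_mult [simp]:
  assumes "wiener f" "wiener g"
  shows "wiener (f * g)"
proof -
  have s: "summable (\<lambda>k. \<Sum>i\<le>k. norm (f $ i) * norm (g $ (k - i)))"
    using summable_Cauchy_product[of "\<lambda>n. norm (f $ n)" "\<lambda>n. norm (g $ n)"] assms
    by (simp add: wiener_def)
  have "norm ((f * g) $ k) \<le> (\<Sum>i\<le>k. norm (f $ i) * norm (g $ (k - i)))" for k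
    unfolding fps_mult_nth atLeast0AtMost
    by (rule order_trans[OF norm_sum]) (simp add: norm_mult)
  then show ?thesis
    unfolding wiener_def by (intro summable_comparison_test[OF _ s]) auto
qed

lemma wiener_power [simp]: "wiener f \<Longrightarrow> wiener (f ^ n)"
  by (induction n) auto

lemma wiener_shift [simp]: "wiener f \<Longrightarrow> wiener (fps_shift k f)"
  unfolding wiener_def fps_shift_nth
  by (rule summable_ignore_initial_segment[where f = "\<lambda>n. norm (f $ n)"])

lemma eval_fps_wiener_add:
  "wiener f \<Longrightarrow> wiener g \<Longrightarrow> norm z \<le> 1 \<Longrightarrow> eval_fps (f + g) z = eval_fps f z + eval_fps g z"
  unfolding eval_fps_def by (simp add: distrib_right suminf_add[symmetric] wiener_summable)

lemma eval_fps_wiener_diff: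
  "wiener f \<Longrightarrow> wiener g \<Longrightarrow> norm z \<le> 1 \<Longrightarrow> eval_fps (f - g) z = eval_fps f z - eval_fps g z"
  unfolding eval_fps_def by (simp add: left_diff_distrib suminf_diff[symmetric] wiener_summable)

lemma eval_fps_wiener_mult:
  assumes "wiener f" "wiener g" "norm z \<le> 1"
  shows "eval_fps (f * g) z = eval_fps f z * eval_fps g z"
proof -
  have "eval_fps f z * eval_fps g z
      = (\<Sum>k. \<Sum>i\<le>k. (f $ i * z ^ i) * (g $ (k - i) * z ^ (k - i)))"
    unfolding eval_fps_def
    by (rule Cauchy_product) (use assms in \<open>auto intro: wiener_summable_norm\<close>)
  also have "\<dots> = (\<Sum>k. (f * g) $ k * z ^ k)"
  proof (rule suminf_cong)
    fix k
    have "(\<Sum>i\<le>k. (f $ i * z ^ i) * (g $ (k - i) * z ^ (k - i)))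
        = (\<Sum>i\<le>k. f $ i * g $ (k - i) * z ^ k)"
    proof (intro sum.cong refl)
      fix i assume "i \<in> {..k}"
      then have "z ^ k = z ^ i * z ^ (k - i)" by (simp add: power_add[symmetric])
      then show "(f $ i * z ^ i) * (g $ (k - i) * z ^ (k - i)) = f $ i * g $ (k - i) * z ^ k"
        by (simp add: ac_simps)
    qed
    then show "(\<Sum>i\<le>k. (f $ i * z ^ i) * (g $ (k - i) * z ^ (k - i))) = (f * g) $ k * z ^ k"
      by (simp add: fps_mult_nth atLeast0AtMost sum_distrib_right)
  qed
  finally show ?thesis by (simp add: eval_fps_def)
qed

lemma eval_fps_wiener_power:
  "wiener f \<Longrightarrow> norm z \<le> 1 \<Longrightarrow> eval_fps (f ^ n) z = eval_fps f z ^ n"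
  by (induction n) (auto simp: eval_fps_wiener_mult)

lemmas eval_fps_wiener = eval_fps_wiener_add eval_fps_wiener_diff eval_fps_wiener_mult
  eval_fps_wiener_power

lemma X_mult_fps_shift: "f $ 0 = 0 \<Longrightarrow> fps_X * fps_shift 1 f = (f :: complex fps)"
  by (rule fps_ext) (case_tac n; simp)


section \<open>Coefficient asymptotics\<close>

definition geo :: "complex \<Rightarrow> complex fps" where
  "geo l = Abs_fps (\<lambda>n. l ^ n)"

lemma geo_inv: "(1 - fps_const l * fps_X) * geo l = 1"
proof (rule fps_ext)
  fix n
  have "(1 - fps_const l * fps_X) * geo l = geo l - fps_X * (fps_const l * geo l)"
    by (simp add: algebra_simps)
  then show "((1 - fps_const l * fps_X) * geo l) $ n = (1 :: complex fps) $ n"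
    by (cases n) (simp_all add: geo_def)
qed

lemma geo_partial_fraction:
  assumes "l \<noteq> m"
  shows "fps_const (l - m) * (geo l * geo m) = fps_const l * geo l - fps_const m * geo m"
proof -
  let ?E = "(1 - fps_const l * fps_X) * (1 - fps_const m * fps_X)"
  have "?E $ 0 \<noteq> 0" by simp
  then have "?E \<noteq> 0" by force
  moreover have "?E * (fps_const (l - m) * (geo l * geo m))
      = fps_const (l - m) * (((1 - fps_const l * fps_X) * geo l) * ((1 - fps_const m * fps_X) * geo m))"
    by (simp only: mult_ac)
  then have "?E * (fps_const (l - m) * (geo l * geo m)) = fps_const (l - m)"
    by (simp only: geo_inv mult_1_right)
  moreover have "?E * (fps_const l * geo l - fps_const m * geo m) = fps_const (l - m)"
  proof -
    have "?E * (fps_const l * geo l - fps_const m * geo m)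
        = fps_const l * (1 - fps_const m * fps_X) * ((1 - fps_const l * fps_X) * geo l)
          - fps_const m * (1 - fps_const l * fps_X) * ((1 - fps_const m * fps_X) * geo m)"
      by algebra
    also have "\<dots> = fps_const l * (1 - fps_const m * fps_X) - fps_const m * (1 - fps_const l * fps_X)"
      by (simp only: geo_inv mult_1_right)
    finally show ?thesis by (simp add: algebra_simps)
  qed
  ultimately show ?thesis by (metis mult_left_cancel)
qed

lemma mult_geo_nth:
  assumes "l * z = 1"
  shows "(h * geo l) $ n = l ^ n * (\<Sum>i\<le>n. h $ i * z ^ i)"
proof -
  have "(h * geo l) $ n = (\<Sum>i\<le>n. h $ i * l ^ (n - i))"
    by (simp add: fps_mult_nth atLeast0AtMost geo_def)
  also have "\<dots> = (\<Sum>i\<le>n. l ^ n * (h $ i * z ^ i))"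
  proof (intro sum.cong refl)
    fix i assume "i \<in> {..n}"
    then have "l ^ n * z ^ i = l ^ (n - i) * (l * z) ^ i"
      by (simp add: power_mult_distrib power_add[symmetric])
    then show "h $ i * l ^ (n - i) = l ^ n * (h $ i * z ^ i)" using assms by simp
  qed
  finally show ?thesis by (simp add: sum_distrib_left)
qed

lemma unimodular_tail_to_0:
  assumes "wiener h" "norm z \<le> 1" "norm l = 1"
  shows "(\<lambda>n. l ^ Suc n * ((\<Sum>i\<le>n. h $ i * z ^ i) - eval_fps h z)) \<longlonglongrightarrow> 0"
proof (rule tendsto_norm_zero_cancel)
  have "(\<lambda>n. \<Sum>i\<le>n. h $ i * z ^ i) \<longlonglongrightarrow> eval_fps h z"
    using wiener_summable[OF assms(1,2)] unfolding eval_fps_def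
    by (simp add: summable_LIMSEQ' atLeast0AtMost)
  then have "(\<lambda>n. norm ((\<Sum>i\<le>n. h $ i * z ^ i) - eval_fps h z)) \<longlonglongrightarrow> 0"
    by (simp add: LIM_zero tendsto_norm_zero)
  then show "(\<lambda>n. norm (l ^ Suc n * ((\<Sum>i\<le>n. h $ i * z ^ i) - eval_fps h z))) \<longlonglongrightarrow> 0"
    by (simp add: norm_mult norm_power assms(3))
qed

text \<open>Darboux-type asymptotics: if \<open>k (1 - cnj z0 X)(1 - cnj z1 X) A = h\<close> with two distinct
  unimodular \<open>z0, z1\<close>, \<open>h\<close> absolutely summable and \<open>h(z1) = 0\<close> (so the pole at \<open>z1\<close> cancels),
  then the coefficients of \<open>A\<close> are asymptotic to a multiple of \<open>cnj z0 ^ n\<close>.\<close>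
lemma coeff_asymptotics:
  fixes h A :: "complex fps" and z0 z1 k :: complex
  assumes h: "wiener h" and n0: "norm z0 = 1" and n1: "norm z1 = 1" and ne: "z0 \<noteq> z1"
    and k: "k \<noteq> 0"
    and eq: "fps_const k * ((1 - fps_const (cnj z0) * fps_X) * (1 - fps_const (cnj z1) * fps_X)) * A = h"
    and h1: "eval_fps h z1 = 0"
  shows "(\<lambda>n. A $ n - (cnj z0 * eval_fps h z0 / (k * (cnj z0 - cnj z1))) * cnj z0 ^ n) \<longlonglongrightarrow> 0"
proof -
  define l m where "l = cnj z0" and "m = cnj z1"
  have lz: "l * z0 = 1" and mz: "m * z1 = 1"
    using complex_norm_square[of z0] complex_norm_square[of z1] n0 n1
    by (simp_all add: l_def m_def mult.commute)
  have klm: "k * (l - m) \<noteq> 0" using ne k by (simp add: l_def m_def)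
  have "fps_const (l - m) * (geo l * geo m)
        * (fps_const k * ((1 - fps_const l * fps_X) * (1 - fps_const m * fps_X)) * A)
      = fps_const (l - m) * fps_const k * A
        * (((1 - fps_const l * fps_X) * geo l) * ((1 - fps_const m * fps_X) * geo m))"
    by (simp only: mult_ac)
  also have "\<dots> = fps_const (k * (l - m)) * A"
    by (simp only: geo_inv mult_1_right) (simp add: mult_ac)
  finally have "fps_const (k * (l - m)) * A
      = fps_const (l - m) * (geo l * geo m)
        * (fps_const k * ((1 - fps_const l * fps_X) * (1 - fps_const m * fps_X)) * A)" ..
  also have "\<dots> = h * (fps_const l * geo l - fps_const m * geo m)"
    using eq geo_partial_fraction[of l m] ne by (simp add: l_def m_def ac_simps)
  also have "\<dots> = fps_const l * (h * geo l) - fps_const m * (h * geo m)"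
    by (simp add: algebra_simps)
  finally have gf: "fps_const (k * (l - m)) * A = fps_const l * (h * geo l) - fps_const m * (h * geo m)" .
  have "k * (l - m) * A $ n
      = l ^ Suc n * (\<Sum>i\<le>n. h $ i * z0 ^ i) - m ^ Suc n * (\<Sum>i\<le>n. h $ i * z1 ^ i)" for n
    using arg_cong[of _ _ "\<lambda>f. f $ n", OF gf] mult_geo_nth[OF lz] mult_geo_nth[OF mz]
    by simp
  then have diff: "A $ n - (l * eval_fps h z0 / (k * (l - m))) * l ^ n
     = (l ^ Suc n * ((\<Sum>i\<le>n. h $ i * z0 ^ i) - eval_fps h z0)
        - m ^ Suc n * ((\<Sum>i\<le>n. h $ i * z1 ^ i) - eval_fps h z1)) / (k * (l - m))" for n
    using h1 klm by (simp add: field_simps)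
  have "(\<lambda>n. (l ^ Suc n * ((\<Sum>i\<le>n. h $ i * z0 ^ i) - eval_fps h z0)
        - m ^ Suc n * ((\<Sum>i\<le>n. h $ i * z1 ^ i) - eval_fps h z1)) / (k * (l - m)))
        \<longlonglongrightarrow> (0 - 0) / (k * (l - m))"
    using n0 n1 klm unfolding l_def m_def
    by (intro tendsto_intros unimodular_tail_to_0[OF h]) auto
  then have "(\<lambda>n. A $ n - (l * eval_fps h z0 / (k * (l - m))) * l ^ n) \<longlonglongrightarrow> 0"
    unfolding diff by simp
  then show ?thesis unfolding l_def m_def .
qed

lemma norm_sq_limit:
  fixes A :: "nat \<Rightarrow> complex"
  assumes "(\<lambda>n. A n - K * l ^ n) \<longlonglongrightarrow> 0" "norm l = 1"
  shows "(\<lambda>n. (norm (A n))\<^sup>2) \<longlonglongrightarrow> (norm K)\<^sup>2"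
proof -
  have bound: "\<bar>norm (A n) - norm K\<bar> \<le> norm (A n - K * l ^ n)" for n
    using norm_triangle_ineq3[of "A n" "K * l ^ n"] assms(2) by (simp add: norm_mult norm_power)
  have "(\<lambda>n. norm (A n) - norm K) \<longlonglongrightarrow> 0"
  proof (rule tendsto_sandwich[of "\<lambda>n. - norm (A n - K * l ^ n)" _ _ "\<lambda>n. norm (A n - K * l ^ n)"])
    show "\<forall>\<^sub>F n in sequentially. - norm (A n - K * l ^ n) \<le> norm (A n) - norm K"
      and "\<forall>\<^sub>F n in sequentially. norm (A n) - norm K \<le> norm (A n - K * l ^ n)"
      using bound unfolding abs_le_iff by (auto intro!: always_eventually) (smt (verit))+
    show "(\<lambda>n. norm (A n - K * l ^ n)) \<longlonglongrightarrow> 0"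
      using tendsto_norm_zero[OF assms(1)] .
    then show "(\<lambda>n. - norm (A n - K * l ^ n)) \<longlonglongrightarrow> 0"
      using tendsto_minus by fastforce
  qed
  then have "(\<lambda>n. norm (A n)) \<longlonglongrightarrow> norm K" by (simp add: LIM_zero_iff)
  then show ?thesis by (rule tendsto_power)
qed

section \<open>The binomial series of \<open>\<surd>(1 + X)\<close>\<close>

abbreviation half_binom :: "nat \<Rightarrow> real" where "half_binom k \<equiv> (1/2 :: real) gchoose k"

text \<open>All coefficients of \<open>\<surd>(1 + X)\<close> beyond the constant term alternate in sign, and the
  alternating partial sums stay nonnegative; hence \<open>\<Sum>|half_binom k|\<close> converges with sum at most 2.\<close>
lemma half_binom_sign: "k \<ge> 1 \<Longrightarrow> half_binom k * (-1) ^ k \<le> 0"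
proof -
  assume "k \<ge> 1"
  then obtain j where k: "k = Suc j" by (cases k) auto
  have "half_binom k * (-1) ^ k = pochhammer (-(1/2)) k / fact k"
    by (simp add: gbinomial_pochhammer power_mult_distrib[symmetric])
  also have "pochhammer (-(1/2::real)) k = -(1/2) * pochhammer (1/2) j"
    unfolding k pochhammer_rec by simp
  also have "-(1/2) * pochhammer (1/2::real) j / fact k \<le> 0"
    using pochhammer_pos[of "1/2 :: real" j] by (simp add: divide_nonpos_pos)
  finally show ?thesis .
qed

lemma half_binom_alternating_sum: "(\<Sum>k\<le>m. half_binom k * (-1) ^ k) \<ge> 0"
proof -
  have "(\<Sum>k\<le>m. half_binom k * (-1) ^ k) = (-1) ^ m * ((1/2 - 1) gchoose m)"
    by (rule gbinomial_sum_lower_neg)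
  also have "\<dots> = pochhammer (1/2::real) m / fact m"
    by (simp add: gbinomial_pochhammer power_mult_distrib[symmetric])
  also have "\<dots> \<ge> 0" by (intro divide_nonneg_pos pochhammer_nonneg) auto
  finally show ?thesis .
qed

lemma half_binom_abs_partial_sum: "(\<Sum>k\<le>m. \<bar>half_binom k\<bar>) \<le> 2"
proof -
  have "\<bar>half_binom k\<bar> = \<bar>half_binom k * (-1) ^ k\<bar>" for k
    by (simp add: abs_mult)
  then have "\<bar>half_binom k\<bar> = (if k = 0 then 2 else 0) - half_binom k * (-1) ^ k" for k
    using half_binom_sign[of k] by (cases "k = 0") auto
  then have "(\<Sum>k\<le>m. \<bar>half_binom k\<bar>) = 2 - (\<Sum>k\<le>m. half_binom k * (-1) ^ k)"
    by (simp add: sum_subtractf sum.delta)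
  then show ?thesis using half_binom_alternating_sum[of m] by simp
qed

lemma summable_abs_half_binom: "summable (\<lambda>k. \<bar>half_binom k\<bar>)"
  by (rule bounded_imp_summable[of _ 2]) (auto intro: half_binom_abs_partial_sum)

lemma suminf_abs_half_binom: "(\<Sum>k. \<bar>half_binom k\<bar>) \<le> 2"
proof (rule suminf_le_const[OF summable_abs_half_binom])
  fix n :: nat
  show "(\<Sum>k<n. \<bar>half_binom k\<bar>) \<le> 2"
  proof (cases n)
    case (Suc m)
    then have "{..<n} = {..m}" by auto
    then show ?thesis using half_binom_abs_partial_sum[of m] by simp
  qed simp
qed

definition sqrt_fps :: "complex fps" where "sqrt_fps = fps_binomial (1/2)"

lemma sqrt_fps_nth: "sqrt_fps $ k = of_real (half_binom k)"
  by (simp add: sqrt_fps_def gbinomial_altdef_of_nat of_real_prod)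

lemma sqrt_fps_square: "sqrt_fps * sqrt_fps = 1 + fps_X"
  by (simp add: sqrt_fps_def fps_binomial_add_mult[symmetric] fps_binomial_1)

lemma wiener_sqrt_fps [simp]: "wiener sqrt_fps"
  unfolding wiener_def sqrt_fps_nth using summable_abs_half_binom by simp

text \<open>On the closed unit disk the series takes values in the closed right half-plane:
  \<open>|\<surd>(1+u) - 1| \<le> \<Sum>\<^sub>k\<^sub>\<ge>\<^sub>1 |half_binom k| \<le> 1\<close>.\<close>
lemma Re_eval_sqrt_fps:
  assumes "norm u \<le> 1"
  shows "Re (eval_fps sqrt_fps u) \<ge> 0"
proof -
  have sn: "summable (\<lambda>n. norm (sqrt_fps $ Suc n * u ^ Suc n))"
    using summable_ignore_initial_segment[OF wiener_summable_norm[OF wiener_sqrt_fps assms], of 1]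
    by simp
  have "eval_fps sqrt_fps u - 1 = (\<Sum>n. sqrt_fps $ Suc n * u ^ Suc n)"
    using suminf_split_head[OF wiener_summable[OF wiener_sqrt_fps assms]]
    by (simp add: eval_fps_def sqrt_fps_nth)
  also have "norm \<dots> \<le> (\<Sum>n. norm (sqrt_fps $ Suc n * u ^ Suc n))"
    by (rule summable_norm[OF sn])
  also have "\<dots> \<le> (\<Sum>n. \<bar>half_binom (Suc n)\<bar>)"
  proof (rule suminf_le[OF _ sn])
    show "summable (\<lambda>n. \<bar>half_binom (Suc n)\<bar>)"
      using summable_ignore_initial_segment[OF summable_abs_half_binom, of 1] by simp
    fix n
    have "\<bar>half_binom (Suc n)\<bar> * norm u ^ Suc n \<le> \<bar>half_binom (Suc n)\<bar>"
      using assms by (intro mult_left_le power_le_one) auto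
    then show "norm (sqrt_fps $ Suc n * u ^ Suc n) \<le> \<bar>half_binom (Suc n)\<bar>"
      by (simp add: sqrt_fps_nth norm_mult norm_power)
  qed
  also have "\<dots> = (\<Sum>n. \<bar>half_binom n\<bar>) - 1"
    using suminf_split_head[OF summable_abs_half_binom] by simp
  also have "\<dots> \<le> 1" using suminf_abs_half_binom by simp
  finally have "norm (eval_fps sqrt_fps u - 1) \<le> 1" .
  then show ?thesis using abs_Re_le_cmod[of "eval_fps sqrt_fps u - 1"] by simp
qed

lemma sector_of_sqrt:
  fixes u :: complex
  assumes "Re (u ^ 2) \<ge> 0" "Re u \<ge> 0"
  shows "\<bar>Im u\<bar> \<le> Re u"
proof -
  have "(Im u)\<^sup>2 \<le> (Re u)\<^sup>2" using assms(1) by (simp add: power2_eq_square)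
  then show ?thesis using assms(2) abs_le_square_iff[of "Im u" "Re u"] by simp
qed

lemma Re_mult_sector_nonneg:
  fixes u v :: complex
  assumes "\<bar>Im u\<bar> \<le> Re u" "\<bar>Im v\<bar> \<le> Re v"
  shows "Re (u * v) \<ge> 0"
proof -
  have "Im u * Im v \<le> \<bar>Im u\<bar> * \<bar>Im v\<bar>" by (simp add: abs_mult[symmetric])
  also have "\<dots> \<le> Re u * Re v" using assms by (intro mult_mono) auto
  finally show ?thesis by simp
qed

lemma sector_eval_sqrt_fps:
  assumes "norm u \<le> 1"
  shows "\<bar>Im (eval_fps sqrt_fps u)\<bar> \<le> Re (eval_fps sqrt_fps u)"
proof (rule sector_of_sqrt)
  have "(eval_fps sqrt_fps u)\<^sup>2 = 1 + u"
    using eval_fps_wiener_mult[OF wiener_sqrt_fps wiener_sqrt_fps assms] assms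
    by (simp add: power2_eq_square sqrt_fps_square eval_fps_wiener_add)
  then show "Re ((eval_fps sqrt_fps u)\<^sup>2) \<ge> 0"
    using abs_Re_le_cmod[of u] assms by simp
qed (rule Re_eval_sqrt_fps[OF assms])


section \<open>Substituting \<open>k X\<^sup>2\<close> into a power series\<close>

definition even_subst :: "complex fps \<Rightarrow> complex \<Rightarrow> complex fps" where
  "even_subst f k = Abs_fps (\<lambda>n. if even n then f $ (n div 2) * k ^ (n div 2) else 0)"

lemma even_subst_nth:
  "even_subst f k $ n = (if even n then f $ (n div 2) * k ^ (n div 2) else 0)"
  by (simp add: even_subst_def)

lemma even_subst_compose: "even_subst f k = f oo (fps_const k * fps_X ^ 2)"
proof (rule fps_ext)
  fix n
  have pw: "(fps_const k * fps_X ^ 2) ^ i $ n = (if n = 2 * i then k ^ i else 0)" for i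
    by (simp only: power_mult_distrib fps_const_power power_mult[symmetric]) simp
  have "(f oo (fps_const k * fps_X ^ 2)) $ n
      = (\<Sum>i = 0..n. (if i = n div 2 \<and> even n then f $ i * k ^ i else 0))"
    unfolding fps_compose_nth pw by (intro sum.cong refl) auto
  also have "\<dots> = even_subst f k $ n"
    by (cases "even n") (simp_all add: sum.delta' even_subst_nth)
  finally show "even_subst f k $ n = (f oo (fps_const k * fps_X ^ 2)) $ n" ..
qed

lemma even_subst_mult: "even_subst (f * g) k = even_subst f k * even_subst g k"
  unfolding even_subst_compose by (rule fps_compose_mult_distrib) simp

lemma even_subst_1_plus_X: "even_subst (1 + fps_X) k = 1 + fps_const k * fps_X ^ 2"
proof (rule fps_ext)
  fix n
  show "even_subst (1 + fps_X) k $ n = (1 + fps_const k * fps_X ^ 2) $ n"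
  proof (cases "even n")
    case True
    then obtain j where "n = 2 * j" by auto
    then show ?thesis by (cases j) (auto simp: even_subst_nth fps_X_nth)
  qed (auto simp: even_subst_nth fps_X_nth odd_pos)
qed

lemma even_subst_sums:
  assumes "wiener f" "norm (k * z ^ 2) \<le> 1"
  shows "(\<lambda>n. even_subst f k $ n * z ^ n) sums eval_fps f (k * z ^ 2)"
proof -
  have "(\<lambda>n. even_subst f k $ (2 * n) * z ^ (2 * n)) sums eval_fps f (k * z ^ 2)"
    using wiener_summable[OF assms] unfolding eval_fps_def
    by (simp add: even_subst_nth power_mult_distrib power_mult[symmetric] mult_ac summable_sums)
  then show ?thesis
    by (subst (asm) sums_mono_reindex[of "\<lambda>n. 2 * n"])
       (auto simp: strict_mono_def even_subst_nth elim!: oddE)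
qed

lemma eval_fps_even_subst:
  "wiener f \<Longrightarrow> norm (k * z ^ 2) \<le> 1 \<Longrightarrow> eval_fps (even_subst f k) z = eval_fps f (k * z ^ 2)"
  unfolding eval_fps_def[of "even_subst f k"] using even_subst_sums by (simp add: sums_iff)

lemma wiener_even_subst:
  assumes "wiener f" "norm k = 1"
  shows "wiener (even_subst f k)"
proof -
  have "(\<lambda>n. norm (even_subst f k $ (2 * n))) sums (\<Sum>n. norm (f $ n))"
    using assms by (simp add: wiener_def even_subst_nth norm_mult norm_power summable_sums)
  then have "(\<lambda>n. norm (even_subst f k $ n)) sums (\<Sum>n. norm (f $ n))"
    by (subst (asm) sums_mono_reindex[of "\<lambda>n. 2 * n"])
       (auto simp: strict_mono_def even_subst_nth elim!: oddE)
  then show ?thesis by (auto simp: wiener_def sums_iff)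
qed

definition sqrt_factor :: "complex \<Rightarrow> complex fps" where
  "sqrt_factor w = even_subst sqrt_fps (- w)"

lemma sqrt_factor_square: "sqrt_factor w * sqrt_factor w = 1 - fps_const w * fps_X ^ 2"
  unfolding sqrt_factor_def even_subst_mult[symmetric] sqrt_fps_square even_subst_1_plus_X
  by simp

lemma wiener_sqrt_factor: "norm w = 1 \<Longrightarrow> wiener (sqrt_factor w)"
  unfolding sqrt_factor_def by (rule wiener_even_subst) simp_all

lemma sector_eval_sqrt_factor:
  assumes "norm w = 1" "norm z \<le> 1"
  shows "\<bar>Im (eval_fps (sqrt_factor w) z)\<bar> \<le> Re (eval_fps (sqrt_factor w) z)"
proof -
  have "norm (- w * z ^ 2) \<le> 1"
    using assms by (simp add: norm_mult norm_power power_le_one)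
  then show ?thesis
    unfolding sqrt_factor_def
    using eval_fps_even_subst[OF wiener_sqrt_fps] sector_eval_sqrt_fps by simp
qed

section \<open>The transfer series\<close>

text \<open>For \<open>|a| \<le> 1\<close> let \<open>w\<close> be the unimodular number with \<open>w + cnj w = 2 - 4|a|\<^sup>2\<close>, so that
  \<open>(1 - w X\<^sup>2)(1 - cnj w X\<^sup>2) = (1 - X\<^sup>2)\<^sup>2 + 4|a|\<^sup>2 X\<^sup>2\<close> is the discriminant of the quadratic
  \<open>a X F\<^sup>2 + (1 - X\<^sup>2) F - cnj a X = 0\<close>.  Its root \<open>F\<close> with \<open>F(0) = 0\<close>, the transfer series,
  is absolutely summable because the square root of the discriminant is.\<close>
definition disc_root :: "complex \<Rightarrow> complex" where
  "disc_root a = Complex (1 - 2 * (cmod a)\<^sup>2) (2 * cmod a * sqrt (1 - (cmod a)\<^sup>2))"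

lemma norm_disc_root:
  assumes "cmod a \<le> 1"
  shows "norm (disc_root a) = 1"
proof -
  have "(sqrt (1 - (cmod a)\<^sup>2))\<^sup>2 = 1 - (cmod a)\<^sup>2"
    using assms by (simp add: power_le_one)
  then have "(1 - 2 * (cmod a)\<^sup>2)\<^sup>2 + (2 * cmod a * sqrt (1 - (cmod a)\<^sup>2))\<^sup>2 = 1"
    by (simp add: power_mult_distrib power2_eq_square algebra_simps)
  then show ?thesis by (simp add: disc_root_def cmod_def)
qed

lemma disc_root_mult_cnj: "cmod a \<le> 1 \<Longrightarrow> disc_root a * cnj (disc_root a) = 1"
  using complex_norm_square[of "disc_root a"] norm_disc_root by simp

lemma disc_root_add_cnj: "disc_root a + cnj (disc_root a) = 2 - 4 * (a * cnj a)"
  unfolding complex_norm_square[symmetric] by (simp add: disc_root_def complex_eq_iff)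

definition disc_sqrt :: "complex \<Rightarrow> complex fps" where
  "disc_sqrt a = sqrt_factor (disc_root a) * sqrt_factor (cnj (disc_root a))"

lemma disc_sqrt_square:
  "disc_sqrt a * disc_sqrt a
     = (1 - fps_const (disc_root a) * fps_X ^ 2) * (1 - fps_const (cnj (disc_root a)) * fps_X ^ 2)"
  unfolding disc_sqrt_def sqrt_factor_square[symmetric] by (simp only: mult_ac)

lemma disc_sqrt_nth_0: "disc_sqrt a $ 0 = 1"
  by (simp add: disc_sqrt_def sqrt_factor_def even_subst_nth sqrt_fps_nth)

lemma wiener_disc_sqrt: "cmod a \<le> 1 \<Longrightarrow> wiener (disc_sqrt a)"
  unfolding disc_sqrt_def by (simp add: wiener_sqrt_factor norm_disc_root)

lemma eval_disc_sqrt_square: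
  assumes "cmod a \<le> 1" "norm z \<le> 1"
  shows "(eval_fps (disc_sqrt a) z)\<^sup>2 = (1 - z\<^sup>2)\<^sup>2 + 4 * (a * cnj a) * z\<^sup>2"
proof -
  have "(eval_fps (disc_sqrt a) z)\<^sup>2 = eval_fps (disc_sqrt a * disc_sqrt a) z"
    using eval_fps_wiener_mult[OF wiener_disc_sqrt wiener_disc_sqrt] assms
    by (simp add: power2_eq_square)
  also have "\<dots> = (1 - disc_root a * z\<^sup>2) * (1 - cnj (disc_root a) * z\<^sup>2)"
    unfolding disc_sqrt_square using assms by (simp add: eval_fps_wiener)
  also have "\<dots> = 1 - (disc_root a + cnj (disc_root a)) * z\<^sup>2
                   + (disc_root a * cnj (disc_root a)) * z\<^sup>2 * z\<^sup>2"
    by (simp add: algebra_simps)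
  also have "\<dots> = (1 - z\<^sup>2)\<^sup>2 + 4 * (a * cnj a) * z\<^sup>2"
    unfolding disc_root_add_cnj disc_root_mult_cnj[OF assms(1)]
    by (simp add: algebra_simps power2_eq_square)
  finally show ?thesis .
qed

lemma Re_eval_disc_sqrt:
  assumes "cmod a \<le> 1" "norm z \<le> 1"
  shows "Re (eval_fps (disc_sqrt a) z) \<ge> 0"
proof -
  have w: "norm (disc_root a) = 1" "norm (cnj (disc_root a)) = 1"
    using norm_disc_root[OF assms(1)] by simp_all
  show ?thesis
    unfolding disc_sqrt_def eval_fps_wiener_mult[OF wiener_sqrt_factor wiener_sqrt_factor, OF w assms(2)]
    by (intro Re_mult_sector_nonneg sector_eval_sqrt_factor w assms(2))
qed

definition transfer :: "complex \<Rightarrow> complex fps" where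
  "transfer a = (if a = 0 then 0
     else fps_const (1 / (2 * a)) * fps_shift 1 (disc_sqrt a - 1 + fps_X ^ 2))"

lemma wiener_transfer: "cmod a \<le> 1 \<Longrightarrow> wiener (transfer a)"
  by (simp add: transfer_def wiener_disc_sqrt)

lemma transfer_X_mult:
  assumes "a \<noteq> 0"
  shows "2 * fps_const a * fps_X * transfer a = disc_sqrt a - 1 + fps_X ^ 2"
proof -
  have "2 * fps_const a * fps_X * transfer a
      = (fps_const (2 * a) * fps_const (1 / (2 * a))) * (fps_X * fps_shift 1 (disc_sqrt a - 1 + fps_X ^ 2))"
    using assms unfolding transfer_def
    by (simp only: if_False mult_ac fps_const_mult[symmetric] numeral_fps_const)
  also have "fps_const (2 * a) * fps_const (1 / (2 * a)) = (1 :: complex fps)"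
    using assms by (simp only: fps_const_mult) simp
  also have "1 * (fps_X * fps_shift 1 (disc_sqrt a - 1 + fps_X ^ 2)) = disc_sqrt a - 1 + fps_X ^ 2"
    using X_mult_fps_shift[of "disc_sqrt a - 1 + fps_X ^ 2"] by (simp add: disc_sqrt_nth_0)
  finally show ?thesis .
qed

lemma quadratic_from_discriminant:
  fixes X F S A B W1 W2 :: "'a::comm_ring_1"
  assumes "2 * A * X * F = S - 1 + X\<^sup>2" "S * S = (1 - W1 * X\<^sup>2) * (1 - W2 * X\<^sup>2)"
    and "W1 * W2 = 1" "W1 + W2 = 2 - 4 * (A * B)"
  shows "4 * A * X * (A * X * F\<^sup>2 + (1 - X\<^sup>2) * F - B * X) = 0"
proof -
  have "4 * A * X * (A * X * F\<^sup>2 + (1 - X\<^sup>2) * F - B * X)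
      = (2 * A * X * F)\<^sup>2 + 2 * (1 - X\<^sup>2) * (2 * A * X * F) - 4 * (A * B) * X\<^sup>2"
    by (simp add: algebra_simps power2_eq_square)
  also have "\<dots> = S * S - (1 - X\<^sup>2)\<^sup>2 - 4 * (A * B) * X\<^sup>2"
    unfolding assms(1) by (simp add: algebra_simps power2_eq_square)
  also have "\<dots> = (2 - 4 * (A * B) - (W1 + W2)) * X\<^sup>2 + (W1 * W2 - 1) * X ^ 4"
    unfolding assms(2) by (simp add: algebra_simps power2_eq_square power4_eq_xxxx)
  also have "\<dots> = 0" unfolding assms(3,4) by simp
  finally show ?thesis .
qed

lemma transfer_quadratic:
  assumes "cmod a \<le> 1"
  shows "fps_const a * fps_X * transfer a ^ 2 + (1 - fps_X ^ 2) * transfer a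
           - fps_const (cnj a) * fps_X = 0"
proof (cases "a = 0")
  case False
  have "fps_const (disc_root a) * fps_const (cnj (disc_root a)) = (1 :: complex fps)"
    using disc_root_mult_cnj[OF assms] by (simp only: fps_const_mult) simp
  moreover have "fps_const (disc_root a) + fps_const (cnj (disc_root a))
      = 2 - 4 * (fps_const a * fps_const (cnj a))"
    unfolding fps_const_add disc_root_add_cnj
    by (simp only: fps_const_sub fps_const_mult numeral_fps_const)
  ultimately have "4 * fps_const a * fps_X * (fps_const a * fps_X * transfer a ^ 2
      + (1 - fps_X ^ 2) * transfer a - fps_const (cnj a) * fps_X) = 0"
    by (intro quadratic_from_discriminant[OF transfer_X_mult[OF False] disc_sqrt_square])
  moreover have "4 * fps_const a * fps_X \<noteq> (0 :: complex fps)"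
    using False by (simp only: mult_eq_0_iff numeral_fps_const fps_const_eq_0_iff fps_X_neq_zero) simp
  ultimately show ?thesis by (simp only: mult_eq_0_iff) simp
qed (simp add: transfer_def)

lemma eval_transfer:
  assumes "a \<noteq> 0" "cmod a \<le> 1" "norm z \<le> 1"
  shows "2 * a * z * eval_fps (transfer a) z = eval_fps (disc_sqrt a) z - 1 + z\<^sup>2"
proof -
  have "eval_fps (2 * fps_const a * fps_X * transfer a) z
      = 2 * a * z * eval_fps (transfer a) z"
    using assms by (simp add: eval_fps_wiener wiener_transfer numeral_fps_const)
  then show ?thesis
    unfolding transfer_X_mult[OF assms(1)]
    using assms by (simp add: eval_fps_wiener wiener_disc_sqrt)
qed

definition kernel :: "complex \<Rightarrow> complex fps" where
  "kernel a = 1 + (fps_const a - fps_const (cnj a)) * fps_X - fps_X ^ 2"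

definition root_re :: "complex \<Rightarrow> real" where "root_re a = sqrt (1 - (Im a)\<^sup>2)"

definition zeta0 :: "complex \<Rightarrow> complex" where
  "zeta0 a = Complex (if Re a \<ge> 0 then root_re a else - root_re a) (Im a)"

definition zeta1 :: "complex \<Rightarrow> complex" where
  "zeta1 a = Complex (if Re a \<ge> 0 then - root_re a else root_re a) (Im a)"

context
  fixes a :: complex
  assumes a_lt_1: "cmod a < 1"
begin

lemma root_re_square: "(root_re a)\<^sup>2 = 1 - (Im a)\<^sup>2"
  and root_re_pos: "root_re a > 0"
proof -
  have "(Im a)\<^sup>2 \<le> (cmod a)\<^sup>2" by (simp add: cmod_def)
  also have "\<dots> < 1" using a_lt_1 by (simp add: power_less_one_iff abs_less_iff)
  finally show "(root_re a)\<^sup>2 = 1 - (Im a)\<^sup>2" "root_re a > 0"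
    by (simp_all add: root_re_def)
qed

lemma norm_zeta0: "norm (zeta0 a) = 1"
  and norm_zeta1: "norm (zeta1 a) = 1"
  using root_re_square by (simp_all add: zeta0_def zeta1_def cmod_def)

lemma zeta0_neq_zeta1: "zeta0 a \<noteq> zeta1 a"
  using root_re_pos by (auto simp: zeta0_def zeta1_def complex_eq_iff)

lemma zeta0_root: "1 + (a - cnj a) * zeta0 a - (zeta0 a)\<^sup>2 = 0"
  and zeta1_root: "1 + (a - cnj a) * zeta1 a - (zeta1 a)\<^sup>2 = 0"
  using root_re_square by (simp_all add: zeta0_def zeta1_def complex_eq_iff power2_eq_square)

lemma Re_zeta0: "Re (of_real (Re a) * zeta0 a) = \<bar>Re a\<bar> * root_re a"
  and Re_zeta1: "Re (of_real (Re a) * zeta1 a) = - \<bar>Re a\<bar> * root_re a"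
  by (simp_all add: zeta0_def zeta1_def)

lemma kernel_factor:
  "kernel a = (1 - fps_const (cnj (zeta0 a)) * fps_X) * (1 - fps_const (cnj (zeta1 a)) * fps_X)"
proof -
  have "cnj (zeta0 a) + cnj (zeta1 a) = cnj a - a"
    and "cnj (zeta0 a) * cnj (zeta1 a) = - 1"
    using root_re_square by (auto simp: zeta0_def zeta1_def complex_eq_iff power2_eq_square)
  then have s: "fps_const (cnj (zeta0 a)) + fps_const (cnj (zeta1 a)) = fps_const (cnj a) - fps_const a"
    and p: "fps_const (cnj (zeta0 a)) * fps_const (cnj (zeta1 a)) = - 1"
    by (simp_all only: fps_const_add fps_const_sub fps_const_mult fps_const_neg[symmetric]
        fps_const_1_eq_1)
  have expand: "(1 - A * X) * (1 - B * X) = 1 - (A + B) * X + (A * B) * X ^ 2"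
    and regroup: "1 - (C - D) * X + (- 1) * X ^ 2 = 1 + (D - C) * X - X ^ 2"
    for A B C D X :: "'b :: comm_ring_1"
    by (simp_all add: algebra_simps power2_eq_square)
  show ?thesis
    unfolding kernel_def expand s p regroup ..
qed

end

lemma right_half_plane_sqrt_unique:
  fixes u v :: complex
  assumes "u\<^sup>2 = v\<^sup>2" "Re u \<ge> 0" "Re v > 0 \<or> v = 0"
  shows "u = v"
proof -
  have "u = v \<or> u = - v" using assms(1) by (simp add: power2_eq_iff)
  then show ?thesis using assms(2,3) by auto
qed

lemma eval_disc_sqrt_at_root:
  assumes "cmod a \<le> 1" "norm z \<le> 1" "1 + (a - cnj a) * z - z\<^sup>2 = 0"
  shows "(eval_fps (disc_sqrt a) z)\<^sup>2 = (2 * of_real (Re a) * z)\<^sup>2"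
proof -
  have "1 - z\<^sup>2 = - ((a - cnj a) * z)" using assms(3) by (simp add: algebra_simps)
  then have "(1 - z\<^sup>2)\<^sup>2 + 4 * (a * cnj a) * z\<^sup>2 = ((a - cnj a) * z)\<^sup>2 + 4 * (a * cnj a) * z\<^sup>2"
    by simp
  also have "\<dots> = ((a + cnj a) * z)\<^sup>2"
    by (simp add: algebra_simps power2_eq_square)
  finally show ?thesis
    unfolding eval_disc_sqrt_square[OF assms(1,2)] complex_add_cnj by (simp add: mult_ac)
qed

text \<open>Values of the transfer series at the two roots: \<open>F(\<zeta>\<^sub>0) = 1\<close> and \<open>F(\<zeta>\<^sub>1) = - cnj a / a\<close>
  (stated multiplied by \<open>a\<close> so as to include \<open>a = 0\<close>).\<close>
lemma eval_transfer_zeta0: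
  assumes "cmod a < 1"
  shows "a * eval_fps (transfer a) (zeta0 a) = a"
proof (cases "a = 0")
  case False
  let ?z = "zeta0 a"
  have nz: "norm ?z \<le> 1" "?z \<noteq> 0" using norm_zeta0[OF assms] by auto
  have "Re (2 * of_real (Re a) * ?z) > 0 \<or> 2 * of_real (Re a) * ?z = 0"
    using Re_zeta0[OF assms] root_re_pos[OF assms] by (cases "Re a = 0") auto
  then have S: "eval_fps (disc_sqrt a) ?z = 2 * of_real (Re a) * ?z"
    using assms nz(1) zeta0_root[OF assms]
    by (intro right_half_plane_sqrt_unique[OF eval_disc_sqrt_at_root Re_eval_disc_sqrt]) auto
  have "?z\<^sup>2 - 1 = (a - cnj a) * ?z" using zeta0_root[OF assms] by (simp add: algebra_simps)
  then have "2 * a * ?z * eval_fps (transfer a) ?z = (a + cnj a) * ?z + (a - cnj a) * ?z"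
    using eval_transfer[OF False _ nz(1)] assms unfolding S complex_add_cnj by simp
  also have "\<dots> = 2 * a * ?z" by (simp add: algebra_simps)
  finally show ?thesis using nz by simp
qed simp

lemma eval_transfer_zeta1:
  assumes "cmod a < 1"
  shows "a * eval_fps (transfer a) (zeta1 a) = - cnj a"
proof (cases "a = 0")
  case False
  let ?z = "zeta1 a"
  have nz: "norm ?z \<le> 1" "?z \<noteq> 0" using norm_zeta1[OF assms] by auto
  have "Re (- (2 * of_real (Re a) * ?z)) > 0 \<or> - (2 * of_real (Re a) * ?z) = 0"
    using Re_zeta1[OF assms] root_re_pos[OF assms] by (cases "Re a = 0") auto
  then have S: "eval_fps (disc_sqrt a) ?z = - (2 * of_real (Re a) * ?z)"
    using assms nz(1) zeta1_root[OF assms]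
    by (intro right_half_plane_sqrt_unique[OF _ Re_eval_disc_sqrt])
       (auto simp: eval_disc_sqrt_at_root)
  have "?z\<^sup>2 - 1 = (a - cnj a) * ?z" using zeta1_root[OF assms] by (simp add: algebra_simps)
  then have "2 * a * ?z * eval_fps (transfer a) ?z = - (a + cnj a) * ?z + (a - cnj a) * ?z"
    using eval_transfer[OF False _ nz(1)] assms unfolding S complex_add_cnj by simp
  also have "\<dots> = (2 * ?z) * (- cnj a)" by (simp add: algebra_simps)
  finally have "(2 * ?z) * (a * eval_fps (transfer a) ?z) = (2 * ?z) * (- cnj a)"
    by (simp only: ac_simps)
  moreover have "2 * ?z \<noteq> 0" using nz by simp
  ultimately show ?thesis by (metis mult_left_cancel)
qed simp

section \<open>The reduced walk and its generating functions\<close>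

text \<open>After a gauge transformation (last section) every coin with \<open>c\<^sub>R\<^sub>R \<noteq> 0\<close> reduces to the coin
  \<open>[[c, cnj a], [-a, c]]\<close> with real \<open>c = \<surd>(1 - |a|\<^sup>2) > 0\<close>.  We keep \<open>c\<close> as a parameter
  and record only \<open>c\<^sup>2 + |a|\<^sup>2 = 1\<close> and \<open>c \<noteq> 0\<close> where needed.\<close>
definition reduced_step ::
  "complex \<Rightarrow> complex \<Rightarrow> (nat \<Rightarrow> bool \<Rightarrow> complex) \<Rightarrow> (nat \<Rightarrow> bool \<Rightarrow> complex)" where
  "reduced_step a c psi = (\<lambda>x b.
     if b then (if x = 0 then cnj a * psi 0 True + c * psi 0 False
                else c * psi (x - 1) True - a * psi (x - 1) False)
     else cnj a * psi (x + 1) True + c * psi (x + 1) False)"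

definition reduced_amp :: "complex \<Rightarrow> complex \<Rightarrow> complex \<Rightarrow> complex \<Rightarrow> nat \<Rightarrow> nat \<Rightarrow> bool \<Rightarrow> complex" where
  "reduced_amp a c \<alpha> \<beta> t = (reduced_step a c ^^ t) (typeI_init \<alpha> \<beta>)"

definition amp_gf :: "complex \<Rightarrow> complex \<Rightarrow> complex \<Rightarrow> complex \<Rightarrow> nat \<Rightarrow> bool \<Rightarrow> complex fps" where
  "amp_gf a c \<alpha> \<beta> x b = Abs_fps (\<lambda>t. reduced_amp a c \<alpha> \<beta> t x b)"

lemma reduced_amp_0: "reduced_amp a c \<alpha> \<beta> 0 = typeI_init \<alpha> \<beta>"
  by (simp add: reduced_amp_def)

lemma reduced_amp_Suc: "reduced_amp a c \<alpha> \<beta> (Suc t) = reduced_step a c (reduced_amp a c \<alpha> \<beta> t)"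
  by (simp add: reduced_amp_def)

lemma amp_gf_R0:
  "amp_gf a c \<alpha> \<beta> 0 True = fps_const \<alpha>
     + fps_X * (fps_const (cnj a) * amp_gf a c \<alpha> \<beta> 0 True + fps_const c * amp_gf a c \<alpha> \<beta> 0 False)"
  by (rule fps_ext, case_tac n)
     (simp_all add: amp_gf_def reduced_amp_0 reduced_amp_Suc typeI_init_def reduced_step_def)

lemma amp_gf_R_Suc:
  "amp_gf a c \<alpha> \<beta> (Suc x) True
     = fps_X * (fps_const c * amp_gf a c \<alpha> \<beta> x True - fps_const a * amp_gf a c \<alpha> \<beta> x False)"
  by (rule fps_ext, case_tac n)
     (simp_all add: amp_gf_def reduced_amp_0 reduced_amp_Suc typeI_init_def reduced_step_def)

lemma amp_gf_L:
  "amp_gf a c \<alpha> \<beta> x False = (if x = 0 then fps_const \<beta> else 0)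
     + fps_X * (fps_const (cnj a) * amp_gf a c \<alpha> \<beta> (Suc x) True
                + fps_const c * amp_gf a c \<alpha> \<beta> (Suc x) False)"
  by (rule fps_ext, case_tac n)
     (simp_all add: amp_gf_def reduced_amp_0 reduced_amp_Suc typeI_init_def reduced_step_def)

lemma fps_recursion_vanishes:
  fixes d :: "nat \<Rightarrow> complex fps"
  assumes rec: "\<And>x. x \<ge> 1 \<Longrightarrow> d x + fps_X * (H * d x) = fps_X * (fps_const k * d (Suc x))"
    and "x \<ge> 1"
  shows "d x = 0"
proof -
  have "\<forall>x\<ge>1. d x $ n = 0" for n
  proof (induction n rule: less_induct)
    case (less n)
    show ?case
    proof (intro allI impI)
      fix x :: nat assume x: "x \<ge> 1"
      have e: "d x $ n = (fps_X * (fps_const k * d (Suc x))) $ n - (fps_X * (H * d x)) $ n"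
        using arg_cong[OF rec[OF x], of "\<lambda>f. f $ n"] by (simp add: algebra_simps)
      show "d x $ n = 0"
      proof (cases n)
        case (Suc m)
        have "(H * d x) $ m = (\<Sum>i = 0..m. H $ i * d x $ (m - i))" by (rule fps_mult_nth)
        also have "\<dots> = 0"
          using less.IH[of "m - _"] x Suc by (intro sum.neutral) auto
        finally show ?thesis using e less.IH[of m] Suc x by simp
      qed (use e in simp)
    qed
  qed
  then show ?thesis using assms(2) by (auto intro: fps_ext)
qed

text \<open>Ring identities behind the solution of the recursion.  \<open>F\<close> is a root of the transfer
  quadratic, \<open>G\<close> with \<open>c X G = F - B X\<close> is the ratio \<open>L\<^sub>x / R\<^sub>x\<close> and \<open>X (C - A G)\<close> the ratio
  \<open>R\<^sub>x\<^sub>+\<^sub>1 / R\<^sub>x\<close> away from the origin.\<close>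
lemma ratio_identity:
  fixes X F G C A B :: "'a::comm_ring_1"
  assumes quad: "A * X * F\<^sup>2 + (1 - X\<^sup>2) * F - B * X = 0"
    and XG: "C * X * G = F - B * X"
    and cc: "C * C + A * B = 1"
  shows "C * X * (G - F * (X * (C - A * G))) = 0"
proof -
  have "C * X * (G - F * (X * (C - A * G))) = (F - B * X) - X * F * (C * C * X - A * (C * X * G))"
    by (simp add: algebra_simps XG[symmetric] power2_eq_square)
  also have "\<dots> = A * X * F\<^sup>2 + (1 - X\<^sup>2) * F - B * X - (C * C + A * B - 1) * X\<^sup>2 * F"
    unfolding XG by (simp add: algebra_simps power2_eq_square)
  finally show ?thesis unfolding quad cc by simp
qed

lemma defect_recursion_identity:
  fixes X F G C A B R L R' L' :: "'a::comm_ring_1"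
  assumes R': "R' = X * (C * R - A * L)"
    and L: "L = X * (B * R' + C * L')"
    and XG: "C * X * G = F - B * X"
    and FG: "F * (X * (C - A * G)) = G"
  shows "(1 + A * X * F) * (L - G * R) = X * C * (L' - G * R')"
proof -
  have "L = (B * X + C * X * G) * R' + X * C * (L' - G * R')"
    unfolding L by (simp add: algebra_simps)
  also have "B * X + C * X * G = F" unfolding XG by simp
  finally have "L - G * R = F * R' + X * C * (L' - G * R') - G * R" by simp
  also have "F * R' = F * (X * (C - A * G)) * R - A * X * F * (L - G * R)"
    unfolding R' by (simp add: algebra_simps)
  finally show ?thesis unfolding FG by (simp add: algebra_simps)
qed

lemma boundary_identities:
  fixes X F C A B R0 L0 R1 \<alpha> \<beta> :: "'a::comm_ring_1"
  assumes eR0: "R0 = \<alpha> + X * (B * R0 + C * L0)"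
    and eL0: "L0 = \<beta> + F * R1"
    and eR1: "R1 = X * (C * R0 - A * L0)"
    and cc: "C * C + A * B = 1"
  shows "R0 * (1 - B * X + X * (A - X) * F) = \<alpha> * (1 + A * X * F) + C * X * \<beta>"
    and "L0 * (1 - B * X + X * (A - X) * F) = \<beta> * (1 - B * X) + C * X * F * \<alpha>"
proof -
  have D: "1 - B * X + X * (A - X) * F = (1 - B * X) * (1 + A * X * F) - C * C * X\<^sup>2 * F"
  proof -
    have "1 - B * X + X * (A - X) * F = 1 - B * X + A * X * F - (C * C + A * B) * X\<^sup>2 * F"
      unfolding cc by (simp add: algebra_simps power2_eq_square)
    then show ?thesis by (simp add: algebra_simps power2_eq_square)
  qed
  have r: "R0 * (1 - B * X) = \<alpha> + C * X * L0" using eR0 by (simp add: algebra_simps)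
  have l: "L0 * (1 + A * X * F) = \<beta> + C * X * F * R0" using eL0 eR1 by (simp add: algebra_simps)
  have "R0 * (1 - B * X + X * (A - X) * F)
      = (R0 * (1 - B * X)) * (1 + A * X * F) - C * C * X\<^sup>2 * F * R0"
    unfolding D by (simp add: algebra_simps)
  also have "\<dots> = \<alpha> * (1 + A * X * F) + C * X * (L0 * (1 + A * X * F) - C * X * F * R0)"
    unfolding r by (simp add: algebra_simps power2_eq_square)
  finally show "R0 * (1 - B * X + X * (A - X) * F) = \<alpha> * (1 + A * X * F) + C * X * \<beta>"
    unfolding l by simp
  have "L0 * (1 - B * X + X * (A - X) * F)
      = (L0 * (1 + A * X * F)) * (1 - B * X) - C * C * X\<^sup>2 * F * L0"
    unfolding D by (simp add: algebra_simps)
  also have "\<dots> = \<beta> * (1 - B * X) + C * X * F * (R0 * (1 - B * X) - C * X * L0)"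
    unfolding l by (simp add: algebra_simps power2_eq_square)
  finally show "L0 * (1 - B * X + X * (A - X) * F) = \<beta> * (1 - B * X) + C * X * F * \<alpha>"
    unfolding r by simp
qed

lemma denominator_identity:
  fixes X F C A B :: "'a::comm_ring_1"
  assumes quad: "A * X * F\<^sup>2 + (1 - X\<^sup>2) * F - B * X = 0"
    and cc: "C * C + A * B = 1"
  shows "(1 - B * X + X * (A - X) * F) * (C * C + A * X - X\<^sup>2 - A * (A - X) * F)
         = C * C * (1 + (A - B) * X - X\<^sup>2)"
proof -
  have "(1 - B * X + X * (A - X) * F) * (C * C + A * X - X\<^sup>2 - A * (A - X) * F)
      - C * C * (1 + (A - B) * X - X\<^sup>2)
      = - ((A - X)\<^sup>2 * (A * X * F\<^sup>2 + (1 - X\<^sup>2) * F - B * X))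
        + (C * C + A * B - 1) * ((A - X) * X * (F - 1))"
    by (simp add: algebra_simps power2_eq_square)
  then show ?thesis unfolding quad cc by simp
qed

text \<open>With \<open>F\<close> a root of the transfer quadratic:
  \<open>G\<close> is the ratio \<open>L\<^sub>x / R\<^sub>x\<close> and \<open>\<kappa>\<close> the ratio \<open>R\<^sub>x\<^sub>+\<^sub>1 / R\<^sub>x\<close> for \<open>x \<ge> 1\<close>; \<open>W\<close> is the factor
  by which the boundary denominator must be multiplied to become \<open>c\<^sup>2\<close> times the kernel.\<close>
definition lr_ratio :: "complex \<Rightarrow> complex \<Rightarrow> complex fps \<Rightarrow> complex fps" where
  "lr_ratio a c F = fps_const (1 / c) * (fps_shift 1 F - fps_const (cnj a))"

definition rr_ratio :: "complex \<Rightarrow> complex \<Rightarrow> complex fps \<Rightarrow> complex fps" where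
  "rr_ratio a c F = fps_X * (fps_const c - fps_const a * lr_ratio a c F)"

definition cofactor :: "complex \<Rightarrow> complex \<Rightarrow> complex fps \<Rightarrow> complex fps" where
  "cofactor a c F = fps_const c * fps_const c + fps_const a * fps_X - fps_X ^ 2
                    - fps_const a * (fps_const a - fps_X) * F"

definition numer_R0 :: "complex \<Rightarrow> complex \<Rightarrow> complex \<Rightarrow> complex \<Rightarrow> complex fps \<Rightarrow> complex fps" where
  "numer_R0 a c \<alpha> \<beta> F = fps_const \<alpha> * (1 + fps_const a * fps_X * F) + fps_const c * fps_X * fps_const \<beta>"

definition numer_L0 :: "complex \<Rightarrow> complex \<Rightarrow> complex \<Rightarrow> complex \<Rightarrow> complex fps \<Rightarrow> complex fps" where
  "numer_L0 a c \<alpha> \<beta> F = fps_const \<beta> * (1 - fps_const (cnj a) * fps_X) + fps_const c * fps_X * F * fps_const \<alpha>"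

definition numer_R :: "complex \<Rightarrow> complex \<Rightarrow> complex \<Rightarrow> complex \<Rightarrow> complex fps \<Rightarrow> nat \<Rightarrow> complex fps" where
  "numer_R a c \<alpha> \<beta> F x = (if x = 0 then numer_R0 a c \<alpha> \<beta> F
     else rr_ratio a c F ^ (x - 1)
          * (fps_X * (fps_const c * numer_R0 a c \<alpha> \<beta> F - fps_const a * numer_L0 a c \<alpha> \<beta> F)))"

definition numer_L :: "complex \<Rightarrow> complex \<Rightarrow> complex \<Rightarrow> complex \<Rightarrow> complex fps \<Rightarrow> nat \<Rightarrow> complex fps" where
  "numer_L a c \<alpha> \<beta> F x = (if x = 0 then numer_L0 a c \<alpha> \<beta> F else lr_ratio a c F * numer_R a c \<alpha> \<beta> F x)"

context
  fixes a c \<alpha> \<beta> :: complex and F :: "complex fps"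
  assumes quad: "fps_const a * fps_X * F ^ 2 + (1 - fps_X ^ 2) * F - fps_const (cnj a) * fps_X = 0"
    and cc: "c * c + a * cnj a = 1" and c_nz: "c \<noteq> 0"
begin

private abbreviation R :: "nat \<Rightarrow> complex fps" where "R x \<equiv> amp_gf a c \<alpha> \<beta> x True"
private abbreviation L :: "nat \<Rightarrow> complex fps" where "L x \<equiv> amp_gf a c \<alpha> \<beta> x False"
private abbreviation G :: "complex fps" where "G \<equiv> lr_ratio a c F"

lemma cc_fps: "fps_const c * fps_const c + fps_const a * fps_const (cnj a) = (1 :: complex fps)"
  using cc by (simp only: fps_const_mult fps_const_add) simp

lemma X_mult_lr_ratio: "fps_const c * fps_X * G = F - fps_const (cnj a) * fps_X"
proof -
  have "F $ 0 = 0" using arg_cong[OF quad, of "\<lambda>f. f $ 0"] by simp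
  then have XF: "fps_X * fps_shift 1 F = F" by (rule X_mult_fps_shift)
  have "fps_const c * fps_X * G
      = (fps_const c * fps_const (1 / c)) * (fps_X * fps_shift 1 F - fps_X * fps_const (cnj a))"
    unfolding lr_ratio_def by (simp only: mult_ac right_diff_distrib)
  also have "fps_const c * fps_const (1 / c) = (1 :: complex fps)"
    using c_nz by (simp only: fps_const_mult) simp
  finally show ?thesis unfolding XF by (simp add: mult_ac)
qed

lemma transfer_mult_rr_ratio: "F * rr_ratio a c F = G"
proof -
  have "fps_const c * fps_X * (G - F * (fps_X * (fps_const c - fps_const a * G))) = 0"
    by (rule ratio_identity[OF quad X_mult_lr_ratio cc_fps])
  moreover have "fps_const c * fps_X \<noteq> (0 :: complex fps)" using c_nz by simp
  ultimately show ?thesis unfolding rr_ratio_def by simp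
qed

text \<open>Away from the origin the defect \<open>L\<^sub>x - G R\<^sub>x\<close> satisfies a recursion forcing it to vanish.\<close>
lemma L_eq_lr_ratio_R:
  assumes "x \<ge> 1"
  shows "L x = G * R x"
proof -
  have "(L y - G * R y) + fps_X * ((fps_const a * F) * (L y - G * R y))
       = fps_X * (fps_const c * (L (Suc y) - G * R (Suc y)))" if "y \<ge> 1" for y
  proof -
    have "L y = fps_X * (fps_const (cnj a) * R (Suc y) + fps_const c * L (Suc y))"
      using amp_gf_L[of a c \<alpha> \<beta> y] that by simp
    then have "(1 + fps_const a * fps_X * F) * (L y - G * R y)
        = fps_X * fps_const c * (L (Suc y) - G * R (Suc y))"
      by (rule defect_recursion_identity[OF amp_gf_R_Suc _ X_mult_lr_ratio])
         (use transfer_mult_rr_ratio in \<open>simp add: rr_ratio_def\<close>)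
    then show ?thesis by (simp add: algebra_simps)
  qed
  then have "L x - G * R x = 0"
    by (intro fps_recursion_vanishes[where d = "\<lambda>x. L x - G * R x"] assms)
  then show ?thesis by simp
qed

lemma R_power: "x \<ge> 1 \<Longrightarrow> R x = rr_ratio a c F ^ (x - 1) * R 1"
proof (induction x)
  case (Suc y)
  show ?case
  proof (cases "y = 0")
    case False
    then have "R (Suc y) = rr_ratio a c F * R y"
      using L_eq_lr_ratio_R[of y] unfolding amp_gf_R_Suc[of a c \<alpha> \<beta> y] rr_ratio_def
      by (simp add: algebra_simps)
    then show ?thesis using Suc.IH False by (cases y) (simp_all add: mult_ac)
  qed simp
qed simp

lemma L0_eq: "L 0 = fps_const \<beta> + F * R 1"
proof -
  have "L 0 = fps_const \<beta> + fps_X * (fps_const (cnj a) * R 1 + fps_const c * (G * R 1))"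
    using amp_gf_L[of a c \<alpha> \<beta> 0] L_eq_lr_ratio_R[of 1] by simp
  also have "\<dots> = fps_const \<beta> + (fps_const (cnj a) * fps_X + fps_const c * fps_X * G) * R 1"
    by (simp add: algebra_simps)
  finally show ?thesis unfolding X_mult_lr_ratio by simp
qed

lemma R1_eq: "R 1 = fps_X * (fps_const c * R 0 - fps_const a * L 0)"
  using amp_gf_R_Suc[of a c \<alpha> \<beta> 0] by simp

lemma R0_L0_solution:
  defines "D \<equiv> 1 - fps_const (cnj a) * fps_X + fps_X * (fps_const a - fps_X) * F"
  shows "fps_const c * fps_const c * kernel a * R 0 = numer_R0 a c \<alpha> \<beta> F * cofactor a c F"
    and "fps_const c * fps_const c * kernel a * L 0 = numer_L0 a c \<alpha> \<beta> F * cofactor a c F"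
proof -
  have DW: "D * cofactor a c F = fps_const c * fps_const c * kernel a"
    unfolding D_def cofactor_def kernel_def by (rule denominator_identity[OF quad cc_fps])
  note b = boundary_identities[OF amp_gf_R0 L0_eq R1_eq cc_fps]
  have "R 0 * D = numer_R0 a c \<alpha> \<beta> F" and "L 0 * D = numer_L0 a c \<alpha> \<beta> F"
    using b by (simp_all add: D_def numer_R0_def numer_L0_def mult_ac)
  then show "fps_const c * fps_const c * kernel a * R 0 = numer_R0 a c \<alpha> \<beta> F * cofactor a c F"
    and "fps_const c * fps_const c * kernel a * L 0 = numer_L0 a c \<alpha> \<beta> F * cofactor a c F"
    unfolding DW[symmetric] by (simp_all add: mult_ac)
qed

theorem amp_gf_solution:
  shows "fps_const c * fps_const c * kernel a * R x = numer_R a c \<alpha> \<beta> F x * cofactor a c F"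
    and "fps_const c * fps_const c * kernel a * L x = numer_L a c \<alpha> \<beta> F x * cofactor a c F"
proof -
  let ?K = "fps_const c * fps_const c * kernel a"
  have R1: "?K * R 1 = fps_X * (fps_const c * numer_R0 a c \<alpha> \<beta> F - fps_const a * numer_L0 a c \<alpha> \<beta> F)
                       * cofactor a c F"
  proof -
    have "?K * R 1 = fps_X * (fps_const c * (?K * R 0) - fps_const a * (?K * L 0))"
      unfolding R1_eq by (simp add: algebra_simps)
    then show ?thesis unfolding R0_L0_solution by (simp add: algebra_simps)
  qed
  show R: "?K * R x = numer_R a c \<alpha> \<beta> F x * cofactor a c F"
  proof (cases "x = 0")
    case False
    then have "?K * R x = rr_ratio a c F ^ (x - 1) * (?K * R 1)"
      using R_power[of x] by (simp add: mult_ac)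
    then show ?thesis unfolding R1 numer_R_def using False by (simp add: mult_ac)
  qed (use R0_L0_solution in \<open>simp add: numer_R_def\<close>)
  show "?K * L x = numer_L a c \<alpha> \<beta> F x * cofactor a c F"
  proof (cases "x = 0")
    case False
    then have "?K * L x = G * (?K * R x)"
      using L_eq_lr_ratio_R[of x] by (simp add: mult_ac)
    then show ?thesis unfolding R numer_L_def using False by (simp add: mult_ac)
  qed (use R0_L0_solution in \<open>simp add: numer_L_def\<close>)
qed

end

section \<open>The limit distribution of the reduced walk\<close>

definition rho :: "complex \<Rightarrow> real" where "rho a = sqrt (1 - (cmod a)\<^sup>2)"

text \<open>The numerator series for chirality \<open>b\<close> (\<open>True\<close> = right-moving) with the data of the reduced
  coin \<open>c = \<rho>(a)\<close>, \<open>F = transfer a\<close>.\<close>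
definition numer :: "complex \<Rightarrow> complex \<Rightarrow> complex \<Rightarrow> nat \<Rightarrow> bool \<Rightarrow> complex fps" where
  "numer a \<alpha> \<beta> x b = (if b then numer_R else numer_L) a (of_real (rho a)) \<alpha> \<beta> (transfer a) x"

text \<open>The limiting amplitude: the residue of the generating function at the pole \<open>cnj \<zeta>\<^sub>0\<close>.\<close>
definition limit_amp :: "complex \<Rightarrow> complex \<Rightarrow> complex \<Rightarrow> nat \<Rightarrow> bool \<Rightarrow> complex" where
  "limit_amp a \<alpha> \<beta> x b =
     cnj (zeta0 a) * eval_fps (numer a \<alpha> \<beta> x b) (zeta0 a)
     * eval_fps (cofactor a (of_real (rho a)) (transfer a)) (zeta0 a)
     / (of_real (rho a) * of_real (rho a) * (cnj (zeta0 a) - cnj (zeta1 a)))"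

context
  fixes a :: complex
  assumes a_lt_1: "cmod a < 1"
begin

private abbreviation c :: complex where "c \<equiv> of_real (rho a)"
private abbreviation F :: "complex fps" where "F \<equiv> transfer a"
private abbreviation W :: "complex fps" where "W \<equiv> cofactor a c F"

lemma rho_pos: "rho a > 0"
  using a_lt_1 by (simp add: rho_def power_less_one_iff abs_less_iff)

lemma c_square: "c * c + a * cnj a = 1"
proof -
  have "(rho a)\<^sup>2 = 1 - (cmod a)\<^sup>2"
    using a_lt_1 by (simp add: rho_def power_le_one abs_le_iff)
  then have "c * c = 1 - of_real ((cmod a)\<^sup>2)"
    by (simp add: power2_eq_square flip: of_real_mult)
  then show ?thesis using complex_norm_square[of a] by simp
qed

lemma c_nz: "c \<noteq> 0" using rho_pos by simp

lemma transfer_quad: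
  "fps_const a * fps_X * F ^ 2 + (1 - fps_X ^ 2) * F - fps_const (cnj a) * fps_X = 0"
  using transfer_quadratic a_lt_1 by simp

lemma wiener_F [simp]: "wiener F"
  using wiener_transfer a_lt_1 by simp

lemma wiener_lr_ratio: "wiener (lr_ratio a c F)"
  and wiener_rr_ratio: "wiener (rr_ratio a c F)"
  and wiener_numer_R0: "wiener (numer_R0 a c \<alpha> \<beta> F)"
  and wiener_numer_L0: "wiener (numer_L0 a c \<alpha> \<beta> F)"
  and wiener_cofactor: "wiener W"
  by (simp_all add: rr_ratio_def lr_ratio_def numer_R0_def numer_L0_def cofactor_def)

lemma wiener_numer: "wiener (numer a \<alpha> \<beta> x b)"
  by (simp add: numer_def numer_R_def numer_L_def wiener_lr_ratio wiener_rr_ratio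
      wiener_numer_R0 wiener_numer_L0)

lemma eval_cofactor:
  assumes "norm z \<le> 1"
  shows "eval_fps W z = c * c + a * z - z\<^sup>2 - (a - z) * (a * eval_fps F z)"
  unfolding cofactor_def using assms by (simp add: eval_fps_wiener algebra_simps)

text \<open>\<open>W\<close> vanishes at \<open>\<zeta>\<^sub>1\<close>, which removes the second pole, and does not vanish at \<open>\<zeta>\<^sub>0\<close> unless
  \<open>Re a = 0\<close>.\<close>
lemma cofactor_zeta1: "eval_fps W (zeta1 a) = 0"
proof -
  let ?z = "zeta1 a"
  have "eval_fps W ?z = (c * c + a * cnj a) + (a - cnj a) * ?z - ?z\<^sup>2"
    using eval_cofactor[of ?z] norm_zeta1[OF a_lt_1] eval_transfer_zeta1[OF a_lt_1]
    by (simp add: algebra_simps)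
  then show ?thesis using zeta1_root[OF a_lt_1] unfolding c_square by simp
qed

lemma cofactor_zeta0: "eval_fps W (zeta0 a) = 2 * of_real (Re a) * (zeta0 a - a)"
proof -
  let ?z = "zeta0 a"
  have "eval_fps W ?z = c * c + a * ?z - ?z\<^sup>2 - (a - ?z) * a"
    using eval_cofactor[of ?z] norm_zeta0[OF a_lt_1] eval_transfer_zeta0[OF a_lt_1] by simp
  also have "?z\<^sup>2 = 1 + (a - cnj a) * ?z" using zeta0_root[OF a_lt_1] by (simp add: algebra_simps)
  also have "c * c + a * ?z - (1 + (a - cnj a) * ?z) - (a - ?z) * a
      = (c * c + a * cnj a - 1) + (a + cnj a) * (?z - a)"
    by (simp add: algebra_simps)
  finally show ?thesis unfolding c_square complex_add_cnj by simp
qed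

lemma reduced_amp_limit:
  "(\<lambda>t. (cmod (reduced_amp a c \<alpha> \<beta> t x b))\<^sup>2) \<longlonglongrightarrow> (cmod (limit_amp a \<alpha> \<beta> x b))\<^sup>2"
proof -
  let ?h = "numer a \<alpha> \<beta> x b * W"
  have eq: "fps_const (c * c) * ((1 - fps_const (cnj (zeta0 a)) * fps_X)
              * (1 - fps_const (cnj (zeta1 a)) * fps_X)) * amp_gf a c \<alpha> \<beta> x b = ?h"
    using amp_gf_solution[OF transfer_quad c_square c_nz, of \<alpha> \<beta> x]
    unfolding kernel_factor[OF a_lt_1] numer_def
    by (cases b) (simp_all add: fps_const_mult[symmetric] del: fps_const_mult)
  have h: "wiener ?h" by (simp add: wiener_numer wiener_cofactor)
  have "eval_fps ?h (zeta1 a) = 0"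
    using norm_zeta1[OF a_lt_1] cofactor_zeta1
    by (simp add: eval_fps_wiener_mult wiener_numer wiener_cofactor)
  from coeff_asymptotics[OF h norm_zeta0[OF a_lt_1] norm_zeta1[OF a_lt_1] zeta0_neq_zeta1[OF a_lt_1]
      _ eq this]
  have "(\<lambda>t. amp_gf a c \<alpha> \<beta> x b $ t - limit_amp a \<alpha> \<beta> x b * cnj (zeta0 a) ^ t) \<longlonglongrightarrow> 0"
    using c_nz norm_zeta0[OF a_lt_1]
    by (simp add: limit_amp_def eval_fps_wiener_mult wiener_numer wiener_cofactor mult.assoc)
  from norm_sq_limit[OF this] norm_zeta0[OF a_lt_1]
  show ?thesis by (simp add: amp_gf_def)
qed


text \<open>When \<open>Re a \<noteq> 0\<close>, \<open>\<zeta>\<^sub>0 - a = c \<nu>\<close> with the real number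
  \<open>\<nu> = nu_I a\<close>, and all the ratio series take the value \<open>\<nu>\<close> at \<open>\<zeta>\<^sub>0\<close>; the limiting amplitudes
  therefore form a geometric sequence in \<open>x\<close>.\<close>
context
  assumes Re_nz: "Re a \<noteq> 0"
begin

private abbreviation z :: complex where "z \<equiv> zeta0 a"
private abbreviation \<nu> :: complex where "\<nu> \<equiv> of_real (nu_I a)"

lemma zeta0_minus_a: "z - a = c * \<nu>"
proof -
  have "nu_I a = (Re z - Re a) / rho a"
    using Re_nz rho_pos
    by (cases "Re a > 0") (auto simp: nu_I_def zeta0_def root_re_def rho_def field_simps)
  then have "c * \<nu> = of_real (Re z - Re a)" using rho_pos by simp
  also have "\<dots> = z - a" by (simp add: complex_eq_iff zeta0_def)
  finally show ?thesis ..
qed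

lemma nu_identities:
  shows "c * z = \<nu> * (1 + a * z)" and "1 - cnj a * z = \<nu> * c * z"
proof -
  have sq: "z\<^sup>2 = 1 + (a - cnj a) * z" using zeta0_root[OF a_lt_1] by (simp add: algebra_simps)
  have cm: "1 - a * cnj a = c * c" using c_square by (simp add: algebra_simps)
  have "(z - a) * (1 + a * z) = z * (1 - a * cnj a) + a * (z\<^sup>2 - (1 + (a - cnj a) * z))"
    by (simp add: algebra_simps power2_eq_square)
  also have "\<dots> = c * c * z" unfolding sq cm by simp
  finally have "c * (\<nu> * (1 + a * z)) = c * (c * z)"
    unfolding zeta0_minus_a by (simp add: mult_ac)
  then show "c * z = \<nu> * (1 + a * z)" using c_nz by simp
  have "1 - cnj a * z = z * (z - a)" using sq by (simp add: algebra_simps power2_eq_square)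
  then show "1 - cnj a * z = \<nu> * c * z" unfolding zeta0_minus_a by (simp add: mult_ac)
qed

lemma eval_transfer_zeta0_eq_1: "eval_fps F z = 1"
  using eval_transfer_zeta0[OF a_lt_1] Re_nz by (cases "a = 0") auto

lemma eval_lr_ratio: "eval_fps (lr_ratio a c F) z = \<nu>"
proof -
  have "c * z * eval_fps (lr_ratio a c F) z = eval_fps (F - fps_const (cnj a) * fps_X) z"
    using arg_cong[OF X_mult_lr_ratio[OF transfer_quad c_square c_nz], of "\<lambda>f. eval_fps f z"]
      a_lt_1 norm_zeta0[OF a_lt_1]
    by (simp add: eval_fps_wiener lr_ratio_def)
  also have "\<dots> = c * z * \<nu>"
    using a_lt_1 norm_zeta0[OF a_lt_1] nu_identities(2)
    by (simp add: eval_fps_wiener eval_transfer_zeta0_eq_1 mult_ac)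
  finally show ?thesis using c_nz norm_zeta0[OF a_lt_1] by auto
qed

lemma eval_rr_ratio: "eval_fps (rr_ratio a c F) z = \<nu>"
proof -
  have "eval_fps (rr_ratio a c F) z = c * z - \<nu> * (a * z)"
    unfolding rr_ratio_def using norm_zeta0[OF a_lt_1]
    by (simp add: eval_fps_wiener wiener_lr_ratio eval_lr_ratio algebra_simps)
  then show ?thesis unfolding nu_identities(1) by (simp add: algebra_simps)
qed

lemma eval_numer_zeta0:
  "eval_fps (numer a \<alpha> \<beta> x b) z = \<nu> ^ (if b then x else Suc x) * ((1 + a * z) * (\<alpha> + \<nu> * \<beta>))"
proof -
  let ?N = "(1 + a * z) * (\<alpha> + \<nu> * \<beta>)"
  have nz: "norm z \<le> 1" using norm_zeta0[OF a_lt_1] by simp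
  have R0: "eval_fps (numer_R0 a c \<alpha> \<beta> F) z = ?N"
    using nz a_lt_1 nu_identities(1)
    by (simp add: numer_R0_def eval_fps_wiener eval_transfer_zeta0_eq_1 algebra_simps)
  have L0: "eval_fps (numer_L0 a c \<alpha> \<beta> F) z = \<nu> * ?N"
  proof -
    have "eval_fps (numer_L0 a c \<alpha> \<beta> F) z = \<beta> * (1 - cnj a * z) + c * z * \<alpha>"
      using nz a_lt_1 by (simp add: numer_L0_def eval_fps_wiener eval_transfer_zeta0_eq_1)
    also have "\<dots> = (c * z) * (\<alpha> + \<nu> * \<beta>)"
      unfolding nu_identities(2) by (simp add: algebra_simps)
    finally show ?thesis unfolding nu_identities(1) by (simp add: mult_ac)
  qed
  have R: "eval_fps (numer_R a c \<alpha> \<beta> F y) z = \<nu> ^ y * ?N" for y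
  proof (cases "y = 0")
    case False
    have "eval_fps (numer_R a c \<alpha> \<beta> F y) z = \<nu> ^ (y - 1) * (z * (c * ?N - a * (\<nu> * ?N)))"
      using False nz
      by (simp add: numer_R_def eval_fps_wiener wiener_rr_ratio wiener_numer_R0 wiener_numer_L0
          eval_rr_ratio R0 L0)
    also have "\<dots> = \<nu> ^ (y - 1) * (z * (c - a * \<nu>)) * ?N" by (simp add: algebra_simps)
    also have "z * (c - a * \<nu>) = \<nu>" using nu_identities(1) by (simp add: algebra_simps)
    finally show ?thesis using False by (simp add: power_eq_if)
  qed (simp add: numer_R_def R0)
  show ?thesis
  proof (cases b)
    case False
    have "eval_fps (numer_L a c \<alpha> \<beta> F x) z = \<nu> ^ Suc x * ?N"
      using nz R[of x] wiener_numer[of \<alpha> \<beta> x True]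
      by (cases "x = 0")
         (simp_all add: numer_L_def L0 eval_fps_wiener wiener_lr_ratio eval_lr_ratio numer_def)
    then show ?thesis using False by (simp add: numer_def)
  qed (simp add: numer_def R)
qed

lemma norm_limit_amp:
  "cmod (limit_amp a \<alpha> \<beta> x b)
     = \<bar>nu_I a\<bar> ^ (if b then x else Suc x) * cmod (\<alpha> + \<nu> * \<beta>) * \<bar>Re a\<bar> / root_re a"
proof -
  have rz: "(1 + a * z) * (z - a) = c * c * z"
    unfolding zeta0_minus_a using nu_identities(1) by (simp add: mult_ac)
  have "cmod ((1 + a * z) * (z - a)) = rho a * rho a"
    unfolding rz using norm_zeta0[OF a_lt_1] rho_pos by (simp add: norm_mult)
  then have key: "cmod (1 + a * z) * (\<bar>nu_I a\<bar> * rho a) = rho a * rho a"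
    unfolding zeta0_minus_a using rho_pos by (simp add: norm_mult mult_ac)
  have dz: "cmod (cnj z - cnj (zeta1 a)) = 2 * root_re a"
    using root_re_pos[OF a_lt_1]
    by (simp add: zeta0_def zeta1_def cmod_def flip: complex_cnj_diff)
  have "cmod (limit_amp a \<alpha> \<beta> x b)
      = \<bar>nu_I a\<bar> ^ (if b then x else Suc x) * cmod (\<alpha> + \<nu> * \<beta>) * (2 * \<bar>Re a\<bar>)
        * (cmod (1 + a * z) * (\<bar>nu_I a\<bar> * rho a)) / (rho a * rho a * (2 * root_re a))"
    unfolding limit_amp_def eval_numer_zeta0 cofactor_zeta0 zeta0_minus_a
    using norm_zeta0[OF a_lt_1] dz rho_pos
    by (simp add: norm_mult norm_divide norm_power mult_ac)
  then show ?thesis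
    unfolding key using rho_pos root_re_pos[OF a_lt_1] by (simp add: field_simps)
qed

end

lemma limit_amp_Re_zero: "Re a = 0 \<Longrightarrow> limit_amp a \<alpha> \<beta> x b = 0"
  using cofactor_zeta0 by (simp add: limit_amp_def)

theorem reduced_walk_limit:
  shows "(\<lambda>t. (cmod (reduced_amp a (of_real (rho a)) \<alpha> \<beta> t x True))\<^sup>2
              + (cmod (reduced_amp a (of_real (rho a)) \<alpha> \<beta> t x False))\<^sup>2)
     \<longlonglongrightarrow> (Re a)\<^sup>2 / (1 - (Im a)\<^sup>2) * (cmod (\<alpha> + of_real (nu_I a) * \<beta>))\<^sup>2
          * (1 + (nu_I a)\<^sup>2) * nu_I a ^ (2 * x)"
proof -
  have lim: "(\<lambda>t. (cmod (reduced_amp a (of_real (rho a)) \<alpha> \<beta> t x True))\<^sup>2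
              + (cmod (reduced_amp a (of_real (rho a)) \<alpha> \<beta> t x False))\<^sup>2)
      \<longlonglongrightarrow> (cmod (limit_amp a \<alpha> \<beta> x True))\<^sup>2 + (cmod (limit_amp a \<alpha> \<beta> x False))\<^sup>2"
    by (intro tendsto_add reduced_amp_limit)
  show ?thesis
  proof (cases "Re a = 0")
    case True
    then show ?thesis using lim limit_amp_Re_zero[OF True] by simp
  next
    case False
    have "(\<bar>nu_I a\<bar> ^ n)\<^sup>2 = nu_I a ^ (2 * n)" for n
      by (simp add: power_mult[symmetric] mult.commute power_even_abs)
    then have "(cmod (limit_amp a \<alpha> \<beta> x True))\<^sup>2 + (cmod (limit_amp a \<alpha> \<beta> x False))\<^sup>2
        = (Re a)\<^sup>2 / (root_re a)\<^sup>2 * (cmod (\<alpha> + of_real (nu_I a) * \<beta>))\<^sup>2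
          * (1 + (nu_I a)\<^sup>2) * nu_I a ^ (2 * x)"
      unfolding norm_limit_amp[OF False]
      by (simp add: power_mult_distrib power_divide algebra_simps add_divide_distrib)
    then show ?thesis using lim root_re_square[OF a_lt_1] by simp
  qed
qed

end

section \<open>Reduction of a general coin\<close>

text \<open>A coin of the form \<open>c\<^sub>R\<^sub>R = c d m\<close>, \<open>c\<^sub>L\<^sub>L = c d / m\<close>, \<open>c\<^sub>L\<^sub>R = cnj A d\<close>, \<open>c\<^sub>R\<^sub>L = - A d\<close> is gauge
  equivalent to the reduced coin: the global phase \<open>d\<close> and the position-dependent phase \<open>m\<^sup>x\<close>
  only multiply the amplitudes by unimodular factors.\<close>
lemma gauge_transform:
  fixes cRR cLR cRL cLL c d m A \<alpha> \<beta> :: complex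
  assumes e: "cRR = c * d * m" "cLL = c * d / m" "cLR = cnj A * d" "cRL = - A * d"
    and m: "m \<noteq> 0"
  shows "(typeI_step cRR cLR cRL cLL ^^ t) (typeI_init \<alpha> \<beta>)
    = (\<lambda>x b. d ^ t * m ^ (if b then x else Suc x) * reduced_amp A c \<alpha> (\<beta> / m) t x b)"
proof (induction t)
  case 0
  show ?case using m by (auto simp: reduced_amp_0 typeI_init_def fun_eq_iff)
next
  case (Suc t)
  show ?case
  proof (intro ext)
    fix x b
    show "(typeI_step cRR cLR cRL cLL ^^ Suc t) (typeI_init \<alpha> \<beta>) x b
        = d ^ Suc t * m ^ (if b then x else Suc x) * reduced_amp A c \<alpha> (\<beta> / m) (Suc t) x b"
      unfolding funpow.simps comp_def Suc.IH reduced_amp_Suc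
      unfolding typeI_step_def reduced_step_def e
      using m by (cases b; cases x) (simp_all add: field_simps)
  qed
qed

lemma unitary2_norms:
  assumes "unitary2 cRR cLR cRL cLL"
  shows "cmod cLL = cmod cRR" and "(cmod cLR)\<^sup>2 + (cmod cRR)\<^sup>2 = 1"
proof -
  have n: "cnj w * w = of_real ((cmod w)\<^sup>2)" for w
    using complex_norm_square[of w] by (simp add: mult.commute)
  have "cnj cRR * cRR + cnj cRL * cRL = 1" and "cnj cLR * cLR + cnj cLL * cLL = 1"
    using assms by (simp_all add: unitary2_def)
  then have "complex_of_real ((cmod cRR)\<^sup>2 + (cmod cRL)\<^sup>2) = 1"
    and "complex_of_real ((cmod cLR)\<^sup>2 + (cmod cLL)\<^sup>2) = 1"
    by (simp_all only: n of_real_add)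
  then have c1: "(cmod cRR)\<^sup>2 + (cmod cRL)\<^sup>2 = 1" and c2: "(cmod cLR)\<^sup>2 + (cmod cLL)\<^sup>2 = 1"
    by (simp_all only: of_real_eq_1_iff)
  have "cnj cRR * cLR = - (cnj cRL * cLL)"
    using assms by (simp add: unitary2_def eq_neg_iff_add_eq_0)
  then have "cmod cRR * cmod cLR = cmod cRL * cmod cLL"
    by (metis complex_mod_cnj norm_minus_cancel norm_mult)
  then have "(cmod cRR)\<^sup>2 * (cmod cLR)\<^sup>2 = (1 - (cmod cRR)\<^sup>2) * (1 - (cmod cLR)\<^sup>2)"
    using c1 c2 by (metis add_diff_cancel_left' power_mult_distrib)
  then show s: "(cmod cLR)\<^sup>2 + (cmod cRR)\<^sup>2 = 1" by (simp add: algebra_simps)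
  then have "(cmod cLL)\<^sup>2 = (cmod cRR)\<^sup>2" using c2 by linarith
  then show "cmod cLL = cmod cRR" by (metis norm_ge_zero power2_eq_iff_nonneg)
qed

text \<open>Every unitary coin with \<open>c\<^sub>R\<^sub>R \<noteq> 0\<close> has the gauge form above, with
  \<open>d = \<Delta>\<^sup>1\<^sup>/\<^sup>2\<close>, \<open>m = e\<^sup>i\<^sup>\<phi>\<close>, \<open>A = cnj c\<^sub>L\<^sub>R \<Delta>\<^sup>1\<^sup>/\<^sup>2\<close> and \<open>c = \<rho>(A) = |c\<^sub>R\<^sub>R|\<close>.\<close>
lemma unitary2_gauge_form:
  assumes U: "unitary2 cRR cLR cRL cLL" and nz: "cRR \<noteq> 0"
  defines "d \<equiv> cis ((Arg cRR + Arg cLL) / 2)" and "m \<equiv> cis ((Arg cRR - Arg cLL) / 2)"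
    and "A \<equiv> cnj cLR * cis ((Arg cRR + Arg cLL) / 2)"
  shows "cmod A < 1"
    and "cRR = of_real (rho A) * d * m" "cLL = of_real (rho A) * d / m"
    and "cLR = cnj A * d" "cRL = - A * d"
proof -
  note N = unitary2_norms[OF U]
  have A: "A = cnj cLR * d" by (simp add: A_def d_def)
  have dd: "cnj d * d = 1" and mm: "cnj m * m = 1" and m_nz: "m \<noteq> 0"
    by (simp_all add: d_def m_def cis_cnj cis_mult)
  have nA: "cmod A = cmod cLR" by (simp add: A d_def norm_mult)
  have "(cmod cRR)\<^sup>2 > 0" using nz by simp
  then have "(cmod cLR)\<^sup>2 < 1" using N(2) by linarith
  then show "cmod A < 1" unfolding nA by (simp add: abs_square_less_1)
  have rho: "rho A = cmod cRR"
  proof -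
    have "1 - (cmod cLR)\<^sup>2 = (cmod cRR)\<^sup>2" using N(2) by simp
    then show ?thesis unfolding rho_def nA by simp
  qed
  have "cis (Arg cRR) = d * m" unfolding d_def m_def cis_mult by (simp add: field_simps)
  then show R: "cRR = of_real (rho A) * d * m"
    using rcis_cmod_Arg[of cRR] unfolding rho rcis_def by (simp add: mult_ac)
  have "cis (Arg cLL) = d / m" unfolding d_def m_def cis_divide by (simp add: field_simps)
  then show L: "cLL = of_real (rho A) * d / m"
    using rcis_cmod_Arg[of cLL] unfolding rho rcis_def N(1) by (simp add: mult_ac)
  show "cLR = cnj A * d" using dd by (simp add: A mult_ac)
  have "cnj cLL * cRL = - (cnj cLR * cRR)"
    using U by (simp add: unitary2_def eq_neg_iff_add_eq_0 mult.commute add.commute)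
  also have "cnj cLR = A * cnj d" using dd by (simp add: A mult_ac)
  finally have "cnj cLL * cRL = cnj cLL * (- A * d)"
    unfolding L R using dd mm m_nz by (simp add: field_simps complex_cnj_divide)
  moreover have "cnj cLL \<noteq> 0" using nz N(1) by (metis complex_cnj_zero_iff norm_eq_zero)
  ultimately show "cRL = - A * d" by (metis mult_left_cancel)
qed

text \<open>The half-phase \<open>e\<^sup>i\<^sup>\<phi>\<^sup>/\<^sup>2\<close> of the statement redistributes the phase \<open>m = e\<^sup>i\<^sup>\<phi>\<close> between \<open>\<alpha>\<close> and \<open>\<beta>\<close>.\<close>
lemma norm_half_phase:
  fixes \<alpha> \<beta> :: complex and \<phi> \<nu> :: real
  shows "cmod (\<alpha> * exp (\<i> * of_real (\<phi> / 2)) + \<beta> * exp (- \<i> * of_real (\<phi> / 2)) * of_real \<nu>)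
       = cmod (\<alpha> + of_real \<nu> * (\<beta> / cis \<phi>))"
proof -
  let ?h = "cis (\<phi> / 2)"
  have "\<alpha> * ?h + \<beta> * inverse ?h * of_real \<nu> = ?h * (\<alpha> + of_real \<nu> * (\<beta> / (?h * ?h)))"
    by (simp add: field_simps)
  moreover have "?h * ?h = cis \<phi>" by (simp add: cis_mult)
  moreover have "exp (- \<i> * of_real (\<phi> / 2)) = inverse ?h"
    by (simp add: cis_conv_exp exp_minus)
  ultimately show ?thesis by (simp add: cis_conv_exp norm_mult)
qed

theorem theorem1:
  fixes cRR cLR cRL cLL \<alpha> \<beta> :: complex and x :: nat
  assumes "unitary2 cRR cLR cRL cLL"
    and "cRR \<noteq> 0"
    and "(cmod \<alpha>)\<^sup>2 + (cmod \<beta>)\<^sup>2 = 1"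
  shows "let \<sigma>R = Arg cRR; \<sigma>L = Arg cLL;
             sqrt\<Delta> = exp (\<i> * complex_of_real ((\<sigma>R + \<sigma>L) / 2));
             a = cnj cLR * sqrt\<Delta>;
             \<phi> = (\<sigma>R - \<sigma>L) / 2;
             \<nu> = nu_I a
         in (\<lambda>t. typeI_prob cRR cLR cRL cLL \<alpha> \<beta> t x) \<longlonglongrightarrow>
              (Re a)\<^sup>2 / (1 - (Im a)\<^sup>2)
              * (cmod (\<alpha> * exp (\<i> * complex_of_real (\<phi> / 2))
                       + \<beta> * exp (- \<i> * complex_of_real (\<phi> / 2)) * complex_of_real \<nu>))\<^sup>2
              * (1 + \<nu>\<^sup>2) * \<nu> ^ (2 * x)"
proof -
  define \<phi> where "\<phi> = (Arg cRR - Arg cLL) / 2"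
  define d where "d = cis ((Arg cRR + Arg cLL) / 2)"
  define a where "a = cnj cLR * d"
  have form: "cmod a < 1" "cRR = of_real (rho a) * d * cis \<phi>" "cLL = of_real (rho a) * d / cis \<phi>"
    "cLR = cnj a * d" "cRL = - a * d"
    using unitary2_gauge_form[OF assms(1,2)] unfolding \<phi>_def d_def a_def by simp_all
  \<comment> \<open>in the gauge-transformed picture the phases drop out of the probabilities\<close>
  have prob: "typeI_prob cRR cLR cRL cLL \<alpha> \<beta> t x
      = (cmod (reduced_amp a (of_real (rho a)) \<alpha> (\<beta> / cis \<phi>) t x True))\<^sup>2
        + (cmod (reduced_amp a (of_real (rho a)) \<alpha> (\<beta> / cis \<phi>) t x False))\<^sup>2" for t
    unfolding typeI_prob_def Let_def gauge_transform[OF form(2-5) cis_neq_zero]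
    by (simp add: norm_mult norm_power d_def)
  have "(\<lambda>t. typeI_prob cRR cLR cRL cLL \<alpha> \<beta> t x) \<longlonglongrightarrow>
      (Re a)\<^sup>2 / (1 - (Im a)\<^sup>2) * (cmod (\<alpha> + of_real (nu_I a) * (\<beta> / cis \<phi>)))\<^sup>2
        * (1 + (nu_I a)\<^sup>2) * nu_I a ^ (2 * x)"
    unfolding prob by (rule reduced_walk_limit[OF form(1)])
  then show ?thesis
    unfolding Let_def norm_half_phase \<phi>_def[symmetric]
    by (simp add: a_def d_def cis_conv_exp)
qed

end
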